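(* Let $\mathbb{B}$ be a small bicategory. Then there is an isomorphism of abelian groups $$\mathrm{E}_2^{1,1}\cong\mathrm{Ker}\big(\mathrm{Iso}(\mathbf{Z}(\mathbb{B}))\to \mathrm{Z}(\mathbf{Ho}(\mathbb{B}))\big),$$ where the kernel of the characteristic homomorphism means the set of elements of $\mathrm{Iso}(\mathbf{Z}(\mathbb{B}))$ mapped to the unit of $\mathrm{Z}(\mathbf{Ho}(\mathbb{B}))$ (all such elements are invertible, so this is an abelian group).
   Context: $\mathbb{B}$ is a bicategory with hom-categories $\mathbb{B}(x,y)$, horizontal composition $\otimes\colon\mathbb{B}(y,z)\times\mathbb{B}(x,y)\to\mathbb{B}(x,z)$, identity 1-morphisms $\mathrm{Id}(x)$ and unit identifications $\mathrm{Id}(z)\otimes M\cong M\cong M\otimes\mathrm{Id}(y)$. The Drinfeld center $\mathbf{Z}(\mathbb{B})$ has objects $(P,p)$ with $P=(P(x)\in\mathbb{B}(x,x))_x$ and $p=(p(M)\colon P(y)\otimes M\to M\otimes P(x))_{M\in\mathbb{B}(x,y)}$ natural isomorphisms such that $p(\mathrm{Id}(x))$ is the composite of unit constraints and $p(M\otimes N)=(\mathrm{id}(M)\otimes p(N))(p(M)\otimes\mathrm{id}(N))$ (associators suppressed); morphisms are families $f(x)\colon P(x)\to Q(x)$ with $q(M)(f(y)\otimes\mathrm{id})=(\mathrm{id}\otimes f(x))p(M)$; it is a tensor category under $(P\otimes Q)(x)=P(x)\otimes Q(x)$ with unit $E(x)=\mathrm{Id}(x)$. The classifying category $\mathbf{Ho}(\mathbb{B})$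 has the objects of $\mathbb{B}$ and morphism sets $\mathrm{Iso}\,\mathbb{B}(x,y)$ (isomorphism classes of 1-morphisms); its center $\mathrm{Z}(\mathbf{Ho}(\mathbb{B}))$ is the monoid of families $([P(x)])_x$ with $P(z)\otimes M\cong M\otimes P(y)$ for all $M\in\mathbb{B}(y,z)$. The characteristic homomorphism $\mathrm{Iso}(\mathbf{Z}(\mathbb{B}))\to\mathrm{Z}(\mathbf{Ho}(\mathbb{B}))$ sends $[(P,p)]$ to $([P(x)])_x$. Let $\mathrm{E}_1^{0,1}=\prod_x\mathrm{Aut}(\mathrm{Id}(x))$ and $\mathrm{E}_1^{1,1}=\prod_{y,z}\mathrm{Aut}(\mathrm{id}_{\mathbb{B}(y,z)})$ (natural automorphisms $f=(f(M))$ of identity functors). Let $\mathrm{Z}_1^{1,1}=\{f\in\mathrm{E}_1^{1,1}: f(M\otimes N)=f(M)\otimes f(N)\text{ for all composable }M,N\}$ and $\mathrm{B}_1^{1,1}=\{f: f(M)=(u(z)\otimes\mathrm{id}(M))(\mathrm{id}(M)\otimes u(y)^{-1})\text{ for }M\in\mathbb{B}(y,z),\ u\in\mathrm{E}_1^{0,1}\}$ (using the unit identifications), a subgroup of $\mathrm{Z}_1^{1,1}$. Set $\mathrm{E}_2^{1,1}=\mathrm{Z}_1^{1,1}/\mathrm{B}_1^{1,1}$. *)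

theory Defs
  imports "HOL-Algebra.Coset"
begin

text \<open>A small bicategory: objects, 1-cells (with source/target), 2-cells (with
  domain/codomain 1-cells), vertical composition bvc b a (b after a), identity
  2-cells, horizontal composition of 1-cells bhm M N (M after N, requires
  src M = trg N) and of 2-cells, identity 1-cells, associator
  (M N) L to M (N L), left unitor Id(trg M) M to M, right unitor M Id(src M) to M.\<close>

record ('o,'m,'c) bicat =
  bOb    :: "'o set"
  bMor   :: "'m set"
  bsrc   :: "'m \<Rightarrow> 'o"
  btrg   :: "'m \<Rightarrow> 'o"
  bCel   :: "'c set"
  bdom   :: "'c \<Rightarrow> 'm"
  bcod   :: "'c \<Rightarrow> 'm"
  bvc    :: "'c \<Rightarrow> 'c \<Rightarrow> 'c"
  bic    :: "'m \<Rightarrow> 'c"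
  bhm    :: "'m \<Rightarrow> 'm \<Rightarrow> 'm"
  bhc    :: "'c \<Rightarrow> 'c \<Rightarrow> 'c"
  bunit  :: "'o \<Rightarrow> 'm"
  bassoc :: "'m \<Rightarrow> 'm \<Rightarrow> 'm \<Rightarrow> 'c"
  blu    :: "'m \<Rightarrow> 'c"
  bru    :: "'m \<Rightarrow> 'c"

locale bicat_ops =
  fixes B :: "('o,'m,'c) bicat"
begin

abbreviation "Ob \<equiv> bOb B"
abbreviation "Mor \<equiv> bMor B"
abbreviation "sr \<equiv> bsrc B"
abbreviation "tg \<equiv> btrg B"
abbreviation "Cel \<equiv> bCel B"
abbreviation "dm \<equiv> bdom B"
abbreviation "cd \<equiv> bcod B"
abbreviation "vc \<equiv> bvc B"
abbreviation "ic \<equiv> bic B"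
abbreviation "hm \<equiv> bhm B"
abbreviation "hc \<equiv> bhc B"
abbreviation "un \<equiv> bunit B"
abbreviation "asc \<equiv> bassoc B"
abbreviation "lu \<equiv> blu B"
abbreviation "ru \<equiv> bru B"

definition iso2 :: "'c \<Rightarrow> bool" where
  "iso2 a \<longleftrightarrow> a \<in> Cel \<and> (\<exists>b\<in>Cel. dm b = cd a \<and> cd b = dm a \<and>
      vc b a = ic (dm a) \<and> vc a b = ic (cd a))"

definition inv2 :: "'c \<Rightarrow> 'c" where
  "inv2 a = (THE b. b \<in> Cel \<and> dm b = cd a \<and> cd b = dm a \<and>
      vc b a = ic (dm a) \<and> vc a b = ic (cd a))"

end

locale bicategory = bicat_ops B for B :: "('o,'m,'c) bicat" +
  assumes mor_ob: "M \<in> Mor \<Longrightarrow> sr M \<in> Ob \<and> tg M \<in> Ob"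
  and cel_mor: "a \<in> Cel \<Longrightarrow> dm a \<in> Mor \<and> cd a \<in> Mor \<and> sr (dm a) = sr (cd a) \<and> tg (dm a) = tg (cd a)"
  and vc_cel: "\<lbrakk>a \<in> Cel; b \<in> Cel; cd a = dm b\<rbrakk> \<Longrightarrow>
      vc b a \<in> Cel \<and> dm (vc b a) = dm a \<and> cd (vc b a) = cd b"
  and vc_assoc: "\<lbrakk>a \<in> Cel; b \<in> Cel; c \<in> Cel; cd a = dm b; cd b = dm c\<rbrakk> \<Longrightarrow>
      vc c (vc b a) = vc (vc c b) a"
  and ic_cel: "M \<in> Mor \<Longrightarrow> ic M \<in> Cel \<and> dm (ic M) = M \<and> cd (ic M) = M"
  and ic_left: "a \<in> Cel \<Longrightarrow> vc (ic (cd a)) a = a"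
  and ic_right: "a \<in> Cel \<Longrightarrow> vc a (ic (dm a)) = a"
  and hm_mor: "\<lbrakk>M \<in> Mor; N \<in> Mor; sr M = tg N\<rbrakk> \<Longrightarrow>
      hm M N \<in> Mor \<and> sr (hm M N) = sr N \<and> tg (hm M N) = tg M"
  and hc_cel: "\<lbrakk>a \<in> Cel; b \<in> Cel; sr (dm a) = tg (dm b)\<rbrakk> \<Longrightarrow>
      hc a b \<in> Cel \<and> dm (hc a b) = hm (dm a) (dm b) \<and> cd (hc a b) = hm (cd a) (cd b)"
  and hc_ic: "\<lbrakk>M \<in> Mor; N \<in> Mor; sr M = tg N\<rbrakk> \<Longrightarrow> hc (ic M) (ic N) = ic (hm M N)"
  and interchange: "\<lbrakk>a \<in> Cel; a' \<in> Cel; b \<in> Cel; b' \<in> Cel; cd a = dm a'; cd b = dm b';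
      sr (dm a) = tg (dm b)\<rbrakk> \<Longrightarrow> hc (vc a' a) (vc b' b) = vc (hc a' b') (hc a b)"
  and unit_mor: "x \<in> Ob \<Longrightarrow> un x \<in> Mor \<and> sr (un x) = x \<and> tg (un x) = x"
  and asc_iso: "\<lbrakk>M \<in> Mor; N \<in> Mor; L \<in> Mor; sr M = tg N; sr N = tg L\<rbrakk> \<Longrightarrow>
      iso2 (asc M N L) \<and> dm (asc M N L) = hm (hm M N) L \<and> cd (asc M N L) = hm M (hm N L)"
  and asc_nat: "\<lbrakk>a \<in> Cel; b \<in> Cel; c \<in> Cel; sr (dm a) = tg (dm b); sr (dm b) = tg (dm c)\<rbrakk> \<Longrightarrow>
      vc (asc (cd a) (cd b) (cd c)) (hc (hc a b) c) = vc (hc a (hc b c)) (asc (dm a) (dm b) (dm c))"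
  and lu_iso: "M \<in> Mor \<Longrightarrow> iso2 (lu M) \<and> dm (lu M) = hm (un (tg M)) M \<and> cd (lu M) = M"
  and lu_nat: "a \<in> Cel \<Longrightarrow> vc a (lu (dm a)) = vc (lu (cd a)) (hc (ic (un (tg (dm a)))) a)"
  and ru_iso: "M \<in> Mor \<Longrightarrow> iso2 (ru M) \<and> dm (ru M) = hm M (un (sr M)) \<and> cd (ru M) = M"
  and ru_nat: "a \<in> Cel \<Longrightarrow> vc a (ru (dm a)) = vc (ru (cd a)) (hc a (ic (un (sr (dm a)))))"
  and pentagon: "\<lbrakk>M \<in> Mor; N \<in> Mor; K \<in> Mor; L \<in> Mor; sr M = tg N; sr N = tg K; sr K = tg L\<rbrakk> \<Longrightarrow>
      vc (asc M N (hm K L)) (asc (hm M N) K L) =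
      vc (hc (ic M) (asc N K L)) (vc (asc M (hm N K) L) (hc (asc M N K) (ic L)))"
  and triangle: "\<lbrakk>M \<in> Mor; N \<in> Mor; sr M = tg N\<rbrakk> \<Longrightarrow>
      vc (hc (ic M) (lu N)) (asc M (un (sr M)) N) = hc (ru M) (ic N)"

context bicat_ops
begin

definition zobj :: "('o \<Rightarrow> 'm) \<times> ('m \<Rightarrow> 'c) \<Rightarrow> bool" where
  "zobj Pp \<longleftrightarrow> (case Pp of (P, p) \<Rightarrow>
    (\<forall>x\<in>Ob. P x \<in> Mor \<and> sr (P x) = x \<and> tg (P x) = x) \<and>
    (\<forall>M\<in>Mor. iso2 (p M) \<and> dm (p M) = hm (P (tg M)) M \<and> cd (p M) = hm M (P (sr M))) \<and>
    (\<forall>a\<in>Cel. vc (p (cd a)) (hc (ic (P (tg (dm a)))) a) = vc (hc a (ic (P (sr (dm a))))) (p (dm a))) \<and>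
    (\<forall>x\<in>Ob. p (un x) = vc (inv2 (lu (P x))) (ru (P x))) \<and>
    (\<forall>M\<in>Mor. \<forall>N\<in>Mor. sr M = tg N \<longrightarrow>
       p (hm M N) = vc (inv2 (asc M N (P (sr N))))
                     (vc (hc (ic M) (p N))
                      (vc (asc M (P (sr M)) N)
                       (vc (hc (p M) (ic N))
                        (inv2 (asc (P (tg M)) M N)))))))"

definition zhom :: "('o \<Rightarrow> 'm) \<times> ('m \<Rightarrow> 'c) \<Rightarrow> ('o \<Rightarrow> 'm) \<times> ('m \<Rightarrow> 'c) \<Rightarrow> ('o \<Rightarrow> 'c) \<Rightarrow> bool" where
  "zhom Pp Qq f \<longleftrightarrow> (case Pp of (P, p) \<Rightarrow> case Qq of (Q, q) \<Rightarrow>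
    (\<forall>x\<in>Ob. f x \<in> Cel \<and> dm (f x) = P x \<and> cd (f x) = Q x) \<and>
    (\<forall>M\<in>Mor. vc (q M) (hc (f (tg M)) (ic M)) = vc (hc (ic M) (f (sr M))) (p M)))"

definition zisom :: "('o \<Rightarrow> 'm) \<times> ('m \<Rightarrow> 'c) \<Rightarrow> ('o \<Rightarrow> 'm) \<times> ('m \<Rightarrow> 'c) \<Rightarrow> bool" where
  "zisom Pp Qq \<longleftrightarrow> zobj Pp \<and> zobj Qq \<and>
    (\<exists>f g. zhom Pp Qq f \<and> zhom Qq Pp g \<and>
       (\<forall>x\<in>Ob. vc (g x) (f x) = ic (fst Pp x) \<and> vc (f x) (g x) = ic (fst Qq x)))"

definition zclass :: "('o \<Rightarrow> 'm) \<times> ('m \<Rightarrow> 'c) \<Rightarrow> (('o \<Rightarrow> 'm) \<times> ('m \<Rightarrow> 'c)) set" where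
  "zclass Pp = {Qq. zisom Pp Qq}"

definition ztensor :: "('o \<Rightarrow> 'm) \<times> ('m \<Rightarrow> 'c) \<Rightarrow> ('o \<Rightarrow> 'm) \<times> ('m \<Rightarrow> 'c) \<Rightarrow> ('o \<Rightarrow> 'm) \<times> ('m \<Rightarrow> 'c)" where
  "ztensor Pp Qq = (case Pp of (P, p) \<Rightarrow> case Qq of (Q, q) \<Rightarrow>
    (\<lambda>x. hm (P x) (Q x),
     \<lambda>M. vc (asc M (P (sr M)) (Q (sr M)))
          (vc (hc (p M) (ic (Q (sr M))))
           (vc (inv2 (asc (P (tg M)) M (Q (sr M))))
            (vc (hc (ic (P (tg M))) (q M))
             (asc (P (tg M)) (Q (tg M)) M))))))"

definition zunit :: "('o \<Rightarrow> 'm) \<times> ('m \<Rightarrow> 'c)" where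
  "zunit = (\<lambda>x. un x, \<lambda>M. vc (inv2 (ru M)) (lu M))"

definition IsoZ :: "(('o \<Rightarrow> 'm) \<times> ('m \<Rightarrow> 'c)) set monoid" where
  "IsoZ = \<lparr> carrier = {zclass Pp | Pp. zobj Pp},
            mult = (\<lambda>A C. zclass (ztensor (SOME r. r \<in> A) (SOME r. r \<in> C))),
            one = zclass zunit \<rparr>"

definition isoclass1 :: "'m \<Rightarrow> 'm set" where
  "isoclass1 M = {N \<in> Mor. \<exists>a. iso2 a \<and> dm a = M \<and> cd a = N}"

definition char_map :: "(('o \<Rightarrow> 'm) \<times> ('m \<Rightarrow> 'c)) set \<Rightarrow> 'o \<Rightarrow> 'm set" where
  "char_map A = (\<lambda>x\<in>Ob. isoclass1 (fst (SOME r. r \<in> A) x))"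

definition ZHo_one :: "'o \<Rightarrow> 'm set" where
  "ZHo_one = (\<lambda>x\<in>Ob. isoclass1 (un x))"

definition KerZ :: "(('o \<Rightarrow> 'm) \<times> ('m \<Rightarrow> 'c)) set monoid" where
  "KerZ = IsoZ\<lparr> carrier := {A \<in> carrier IsoZ. char_map A = ZHo_one} \<rparr>"

definition E01 :: "('o \<Rightarrow> 'c) set" where
  "E01 = {u \<in> extensional Ob. \<forall>x\<in>Ob. iso2 (u x) \<and> dm (u x) = un x \<and> cd (u x) = un x}"

definition E11 :: "('m \<Rightarrow> 'c) monoid" where
  "E11 = \<lparr> carrier = {f \<in> extensional Mor.
              (\<forall>M\<in>Mor. iso2 (f M) \<and> dm (f M) = M \<and> cd (f M) = M) \<and>
              (\<forall>a\<in>Cel. vc (f (cd a)) a = vc a (f (dm a)))},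
           mult = (\<lambda>f g. \<lambda>M\<in>Mor. vc (f M) (g M)),
           one = (\<lambda>M\<in>Mor. ic M) \<rparr>"

definition Z11 :: "('m \<Rightarrow> 'c) set" where
  "Z11 = {f \<in> carrier E11. \<forall>M\<in>Mor. \<forall>N\<in>Mor. sr M = tg N \<longrightarrow> f (hm M N) = hc (f M) (f N)}"

definition B11 :: "('m \<Rightarrow> 'c) set" where
  "B11 = {f \<in> extensional Mor. \<exists>u\<in>E01. \<forall>M\<in>Mor.
     f M = vc (lu M) (vc (hc (u (tg M)) (ic M)) (vc (inv2 (lu M))
            (vc (ru M) (vc (hc (ic M) (inv2 (u (sr M)))) (inv2 (ru M))))))}"

definition E2 :: "('m \<Rightarrow> 'c) set monoid" where
  "E2 = (E11\<lparr> carrier := Z11 \<rparr>) Mod B11"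

end

end

theory Submission
  imports Defs
begin

text \<open>A centre object (P, p) lies in the kernel of the characteristic map iff each P x is
  isomorphic to Id x; transporting p along such isomorphisms yields an isomorphic object with
  P = Id. A half-braiding on Id is the same as a natural automorphism f of the identity
  2-functor, via p M = ru(M)\<inverse> \<circ> f M \<circ> lu(M), and the hexagon axiom for p says exactly that
  f(M \<otimes> N) = f M \<otimes> f N, so f \<mapsto> [(Id, p)] maps Z_1^{1,1} onto the kernel, multiplicatively.
  An isomorphism (Id, p_f) \<cong> (Id, p_g) is a family u of automorphisms of the identity
  1-cells, and its compatibility with the half-braidings says that f g\<inverse> is the coboundary
  of u. So the kernel of this map is B_1^{1,1}, and the first isomorphism theorem applies.\<close>

lemma comm_group_image:
  fixes G :: "('a, 'b) monoid_scheme" and H :: "('c, 'd) monoid_scheme"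
  assumes G: "comm_group G"
    and img: "\<psi> ` carrier G = carrier H"
    and hom: "\<And>x y. x \<in> carrier G \<Longrightarrow> y \<in> carrier G \<Longrightarrow> \<psi> (x \<otimes>\<^bsub>G\<^esub> y) = \<psi> x \<otimes>\<^bsub>H\<^esub> \<psi> y"
    and one: "\<one>\<^bsub>H\<^esub> = \<psi> \<one>\<^bsub>G\<^esub>"
  shows "comm_group H"
proof -
  interpret G: comm_group G by (rule G)
  have inH: "\<And>x. x \<in> carrier G \<Longrightarrow> \<psi> x \<in> carrier H" using img by blast
  have HE: "\<And>a. a \<in> carrier H \<Longrightarrow> \<exists>x\<in>carrier G. a = \<psi> x" using img by blast
  show ?thesis
  proof (rule comm_groupI)
    fix a b assume "a \<in> carrier H" "b \<in> carrier H"
    then obtain x y where x: "x \<in> carrier G" "a = \<psi> x" and y: "y \<in> carrier G" "b = \<psi> y"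
      using HE by blast
    show "a \<otimes>\<^bsub>H\<^esub> b \<in> carrier H" using x y hom inH by (metis G.m_closed)
    show "a \<otimes>\<^bsub>H\<^esub> b = b \<otimes>\<^bsub>H\<^esub> a" using x y hom by (metis G.m_comm)
    fix c assume "c \<in> carrier H"
    then obtain z where z: "z \<in> carrier G" "c = \<psi> z" using HE by blast
    show "a \<otimes>\<^bsub>H\<^esub> b \<otimes>\<^bsub>H\<^esub> c = a \<otimes>\<^bsub>H\<^esub> (b \<otimes>\<^bsub>H\<^esub> c)"
      using x y z hom by (metis G.m_closed G.m_assoc)
  next
    show "\<one>\<^bsub>H\<^esub> \<in> carrier H" using one inH by simp
  next
    fix a assume "a \<in> carrier H"
    then obtain x where x: "x \<in> carrier G" "a = \<psi> x" using HE by blast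
    show "\<one>\<^bsub>H\<^esub> \<otimes>\<^bsub>H\<^esub> a = a" using x hom one by (metis G.one_closed G.l_one)
    show "\<exists>y\<in>carrier H. y \<otimes>\<^bsub>H\<^esub> a = \<one>\<^bsub>H\<^esub>"
      using x hom one inH by (metis G.inv_closed G.l_inv)
  qed
qed

lemma FactGroup_iso_onto:
  fixes G :: "('a, 'b) monoid_scheme" and H :: "('c, 'd) monoid_scheme"
  assumes G: "comm_group G"
    and N: "N = {x \<in> carrier G. \<psi> x = \<psi> \<one>\<^bsub>G\<^esub>}"
    and img: "\<psi> ` carrier G = carrier H"
    and hom: "\<And>x y. x \<in> carrier G \<Longrightarrow> y \<in> carrier G \<Longrightarrow> \<psi> (x \<otimes>\<^bsub>G\<^esub> y) = \<psi> x \<otimes>\<^bsub>H\<^esub> \<psi> y"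
    and one: "\<one>\<^bsub>H\<^esub> = \<psi> \<one>\<^bsub>G\<^esub>"
  shows "comm_group (G Mod N) \<and> comm_group H \<and> G Mod N \<cong> H"
proof -
  interpret G: comm_group G by (rule G)
  have H: "comm_group H" by (rule comm_group_image[OF G img hom one])
  interpret H: comm_group H by (rule H)
  interpret gh: group_hom G H \<psi>
    using img by unfold_locales (auto simp: hom_def hom)
  have K: "kernel G H \<psi> = N" unfolding kernel_def N one by simp
  have "G Mod N \<cong> H" using gh.FactGroup_iso[OF img] K by simp
  moreover have "comm_group (G Mod N)"
    using G.abelian_FactGroup gh.subgroup_kernel K by simp
  ultimately show ?thesis using H by simp
qed

context bicategory begin

section \<open>Invertible 2-cells and whiskering\<close>

lemma ob_mor[simp]: "M \<in> Mor \<Longrightarrow> sr M \<in> Ob" "M \<in> Mor \<Longrightarrow> tg M \<in> Ob"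
  using mor_ob by auto

lemma cel_simps[simp]: "a \<in> Cel \<Longrightarrow> dm a \<in> Mor" "a \<in> Cel \<Longrightarrow> cd a \<in> Mor"
  "a \<in> Cel \<Longrightarrow> sr (cd a) = sr (dm a)" "a \<in> Cel \<Longrightarrow> tg (cd a) = tg (dm a)"
  using cel_mor by auto

lemma vc_simps[simp]:
  "\<lbrakk>a \<in> Cel; b \<in> Cel; cd a = dm b\<rbrakk> \<Longrightarrow> vc b a \<in> Cel"
  "\<lbrakk>a \<in> Cel; b \<in> Cel; cd a = dm b\<rbrakk> \<Longrightarrow> dm (vc b a) = dm a"
  "\<lbrakk>a \<in> Cel; b \<in> Cel; cd a = dm b\<rbrakk> \<Longrightarrow> cd (vc b a) = cd b"
  using vc_cel by auto

lemma ic_simps[simp]: "M \<in> Mor \<Longrightarrow> ic M \<in> Cel" "M \<in> Mor \<Longrightarrow> dm (ic M) = M" "M \<in> Mor \<Longrightarrow> cd (ic M) = M"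
  using ic_cel by auto

lemma hm_simps[simp]:
  "\<lbrakk>M \<in> Mor; N \<in> Mor; sr M = tg N\<rbrakk> \<Longrightarrow> hm M N \<in> Mor"
  "\<lbrakk>M \<in> Mor; N \<in> Mor; sr M = tg N\<rbrakk> \<Longrightarrow> sr (hm M N) = sr N"
  "\<lbrakk>M \<in> Mor; N \<in> Mor; sr M = tg N\<rbrakk> \<Longrightarrow> tg (hm M N) = tg M"
  using hm_mor by auto

lemma hc_simps[simp]:
  "\<lbrakk>a \<in> Cel; b \<in> Cel; sr (dm a) = tg (dm b)\<rbrakk> \<Longrightarrow> hc a b \<in> Cel"
  "\<lbrakk>a \<in> Cel; b \<in> Cel; sr (dm a) = tg (dm b)\<rbrakk> \<Longrightarrow> dm (hc a b) = hm (dm a) (dm b)"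
  "\<lbrakk>a \<in> Cel; b \<in> Cel; sr (dm a) = tg (dm b)\<rbrakk> \<Longrightarrow> cd (hc a b) = hm (cd a) (cd b)"
  using hc_cel by auto

lemma un_simps[simp]: "x \<in> Ob \<Longrightarrow> un x \<in> Mor" "x \<in> Ob \<Longrightarrow> sr (un x) = x" "x \<in> Ob \<Longrightarrow> tg (un x) = x"
  using unit_mor by auto

lemma iso2_cel: "iso2 a \<Longrightarrow> a \<in> Cel" unfolding iso2_def by auto

lemma asc_simps[simp]:
  "\<lbrakk>M \<in> Mor; N \<in> Mor; L \<in> Mor; sr M = tg N; sr N = tg L\<rbrakk> \<Longrightarrow> iso2 (asc M N L)"
  "\<lbrakk>M \<in> Mor; N \<in> Mor; L \<in> Mor; sr M = tg N; sr N = tg L\<rbrakk> \<Longrightarrow> dm (asc M N L) = hm (hm M N) L"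
  "\<lbrakk>M \<in> Mor; N \<in> Mor; L \<in> Mor; sr M = tg N; sr N = tg L\<rbrakk> \<Longrightarrow> cd (asc M N L) = hm M (hm N L)"
  using asc_iso by auto

lemma asc_cel[simp]: "\<lbrakk>M \<in> Mor; N \<in> Mor; L \<in> Mor; sr M = tg N; sr N = tg L\<rbrakk> \<Longrightarrow> asc M N L \<in> Cel"
  using asc_iso iso2_cel by blast

lemma lu_cel[simp]: "M \<in> Mor \<Longrightarrow> lu M \<in> Cel" using lu_iso iso2_cel by blast

lemma ru_cel[simp]: "M \<in> Mor \<Longrightarrow> ru M \<in> Cel" using ru_iso iso2_cel by blast

lemma lu_simps[simp]: "M \<in> Mor \<Longrightarrow> iso2 (lu M)" "M \<in> Mor \<Longrightarrow> dm (lu M) = hm (un (tg M)) M"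
  "M \<in> Mor \<Longrightarrow> cd (lu M) = M"
  using lu_iso by auto

lemma ru_simps[simp]: "M \<in> Mor \<Longrightarrow> iso2 (ru M)" "M \<in> Mor \<Longrightarrow> dm (ru M) = hm M (un (sr M))"
  "M \<in> Mor \<Longrightarrow> cd (ru M) = M"
  using ru_iso by auto

lemma vc_ic_left[simp]: "\<lbrakk>a \<in> Cel; cd a = M\<rbrakk> \<Longrightarrow> vc (ic M) a = a" using ic_left by auto

lemma vc_ic_right[simp]: "\<lbrakk>a \<in> Cel; dm a = M\<rbrakk> \<Longrightarrow> vc a (ic M) = a" using ic_right by auto

lemma vc_assoc_right[simp]: "\<lbrakk>a \<in> Cel; b \<in> Cel; c \<in> Cel; cd a = dm b; cd b = dm c\<rbrakk> \<Longrightarrow>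
      vc (vc c b) a = vc c (vc b a)" using vc_assoc by auto

declare hc_ic[simp]

declare iso2_cel[simp]

lemma inv_unique:
  assumes "a \<in> Cel" "b \<in> Cel" "dm b = cd a" "cd b = dm a" "vc b a = ic (dm a)"
    "b' \<in> Cel" "dm b' = cd a" "cd b' = dm a" "vc a b' = ic (cd a)"
  shows "b = b'"
proof -
  have "b = vc b (ic (cd a))" using assms(2,3) by simp
  also have "\<dots> = vc b (vc a b')" by (simp only: assms(9))
  also have "\<dots> = vc (vc b a) b'" by (rule vc_assoc[OF assms(6,1,2,8) assms(3)[symmetric]])
  also have "\<dots> = vc (ic (dm a)) b'" by (simp only: assms(5))
  also have "\<dots> = b'" using assms by simp
  finally show ?thesis .
qed

lemma inv2_props:
  assumes "iso2 a"
  shows "inv2 a \<in> Cel \<and> dm (inv2 a) = cd a \<and> cd (inv2 a) = dm a \<and>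
      vc (inv2 a) a = ic (dm a) \<and> vc a (inv2 a) = ic (cd a)"
proof -
  obtain b where b: "b\<in>Cel" "dm b = cd a" "cd b = dm a" "vc b a = ic (dm a)" "vc a b = ic (cd a)"
    using assms unfolding iso2_def by blast
  have "\<exists>!b. b \<in> Cel \<and> dm b = cd a \<and> cd b = dm a \<and> vc b a = ic (dm a) \<and> vc a b = ic (cd a)"
  proof (rule ex1I[of _ b])
    show "b \<in> Cel \<and> dm b = cd a \<and> cd b = dm a \<and> vc b a = ic (dm a) \<and> vc a b = ic (cd a)"
      using b by blast
    fix b' assume "b' \<in> Cel \<and> dm b' = cd a \<and> cd b' = dm a \<and> vc b' a = ic (dm a) \<and> vc a b' = ic (cd a)"
    then show "b' = b" using inv_unique[of a b' b] b assms iso2_cel by blast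
  qed
  then show ?thesis unfolding inv2_def by (rule theI')
qed

lemma inv2_simps[simp]:
  "iso2 a \<Longrightarrow> inv2 a \<in> Cel" "iso2 a \<Longrightarrow> dm (inv2 a) = cd a" "iso2 a \<Longrightarrow> cd (inv2 a) = dm a"
  "iso2 a \<Longrightarrow> vc (inv2 a) a = ic (dm a)" "iso2 a \<Longrightarrow> vc a (inv2 a) = ic (cd a)"
  using inv2_props by auto

lemma inv2_cancel[simp]:
  "\<lbrakk>iso2 a; x \<in> Cel; cd x = dm a\<rbrakk> \<Longrightarrow> vc (inv2 a) (vc a x) = x"
  "\<lbrakk>iso2 a; x \<in> Cel; cd x = cd a\<rbrakk> \<Longrightarrow> vc a (vc (inv2 a) x) = x"
proof -
  assume "iso2 a" "x \<in> Cel" "cd x = dm a"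
  then have "vc (inv2 a) (vc a x) = vc (vc (inv2 a) a) x" by (simp del: inv2_simps(4))
  then show "vc (inv2 a) (vc a x) = x" using \<open>iso2 a\<close> \<open>x\<in>Cel\<close> \<open>cd x = dm a\<close> by simp
next
  assume "iso2 a" "x \<in> Cel" "cd x = cd a"
  then have "vc a (vc (inv2 a) x) = vc (vc a (inv2 a)) x" by (simp del: inv2_simps(5))
  then show "vc a (vc (inv2 a) x) = x" using \<open>iso2 a\<close> \<open>x\<in>Cel\<close> \<open>cd x = cd a\<close> by simp
qed

lemma inv2_eqI:
  assumes "iso2 a" "b \<in> Cel" "dm b = cd a" "cd b = dm a" "vc b a = ic (dm a)"
  shows "inv2 a = b"
proof -
  have "b = vc b (vc a (inv2 a))" using assms by simp
  also have "\<dots> = vc (vc b a) (inv2 a)" using assms by (intro vc_assoc) auto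
  also have "\<dots> = inv2 a" using assms by simp
  finally show ?thesis by (rule sym)
qed

lemma iso2I: "\<lbrakk>a \<in> Cel; b \<in> Cel; dm b = cd a; cd b = dm a; vc b a = ic (dm a); vc a b = ic (cd a)\<rbrakk> \<Longrightarrow> iso2 a"
  unfolding iso2_def by blast

lemma iso2_inv2[simp]: "iso2 a \<Longrightarrow> iso2 (inv2 a)"
  by (rule iso2I[of _ a]) auto

lemma iso2_ic[simp]: "M \<in> Mor \<Longrightarrow> iso2 (ic M)"
  by (rule iso2I[of _ "ic M"]) auto

lemma inv2_ic[simp]: "M \<in> Mor \<Longrightarrow> inv2 (ic M) = ic M"
  by (rule inv2_eqI) auto

lemma iso2_vc[simp]: "\<lbrakk>iso2 a; iso2 b; cd a = dm b\<rbrakk> \<Longrightarrow> iso2 (vc b a)"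
  by (rule iso2I[of _ "vc (inv2 a) (inv2 b)"]) auto

lemma inv2_vc: "\<lbrakk>iso2 a; iso2 b; cd a = dm b\<rbrakk> \<Longrightarrow> inv2 (vc b a) = vc (inv2 a) (inv2 b)"
  by (rule inv2_eqI) auto

lemma vc_hc_interchange:
  "\<lbrakk>a \<in> Cel; a' \<in> Cel; b \<in> Cel; b' \<in> Cel; cd a = dm a'; cd b = dm b'; sr (dm a) = tg (dm b)\<rbrakk>
    \<Longrightarrow> vc (hc a' b') (hc a b) = hc (vc a' a) (vc b' b)"
  using interchange by simp

lemma iso2_hc[simp]: "\<lbrakk>iso2 a; iso2 b; sr (dm a) = tg (dm b)\<rbrakk> \<Longrightarrow> iso2 (hc a b)"
  by (rule iso2I[of _ "hc (inv2 a) (inv2 b)"]) (auto simp: vc_hc_interchange)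

lemma inv2_hc: "\<lbrakk>iso2 a; iso2 b; sr (dm a) = tg (dm b)\<rbrakk> \<Longrightarrow> inv2 (hc a b) = hc (inv2 a) (inv2 b)"
  by (rule inv2_eqI) (auto simp: vc_hc_interchange)

declare iso2_cel[simp del]

lemma vc_subst_prefix: "\<lbrakk>vc b a = c; a \<in> Cel; b \<in> Cel; cd a = dm b; y \<in> Cel; cd y = dm a\<rbrakk> \<Longrightarrow>
   vc b (vc a y) = vc c y"
  using vc_assoc by metis

lemma whisker_left_vc: "\<lbrakk>M \<in> Mor; a \<in> Cel; b \<in> Cel; cd a = dm b; sr M = tg (dm a)\<rbrakk> \<Longrightarrow>
   hc (ic M) (vc b a) = vc (hc (ic M) b) (hc (ic M) a)"
  using interchange[of "ic M" "ic M" a b] by simp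

lemma whisker_right_vc: "\<lbrakk>N \<in> Mor; a \<in> Cel; b \<in> Cel; cd a = dm b; sr (dm a) = tg N\<rbrakk> \<Longrightarrow>
   hc (vc b a) (ic N) = vc (hc b (ic N)) (hc a (ic N))"
  using interchange[of a b "ic N" "ic N"] by simp

lemma hc_whiskers_right_after_left: "\<lbrakk>a \<in> Cel; b \<in> Cel; sr (dm a) = tg (dm b)\<rbrakk> \<Longrightarrow>
   hc a b = vc (hc a (ic (cd b))) (hc (ic (dm a)) b)"
  using interchange[of "ic (dm a)" a b "ic (cd b)"] by simp

lemma hc_whiskers_left_after_right: "\<lbrakk>a \<in> Cel; b \<in> Cel; sr (dm a) = tg (dm b)\<rbrakk> \<Longrightarrow>
   hc a b = vc (hc (ic (cd a)) b) (hc a (ic (dm b)))"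
  using interchange[of a "ic (cd a)" "ic (dm b)" b] by simp

lemma hc_slide:
  assumes a: "a \<in> Cel" and b: "b \<in> Cel" and ab: "sr (dm a) = tg (dm b)"
  shows "vc (hc a (ic (cd b))) (hc (ic (dm a)) b) = vc (hc (ic (cd a)) b) (hc a (ic (dm b)))"
  using hc_whiskers_right_after_left[OF assms] hc_whiskers_left_after_right[OF assms] by simp

lemma iso2_cancel_right: "\<lbrakk>iso2 a; x \<in> Cel; y \<in> Cel; dm x = cd a; dm y = cd a; vc x a = vc y a\<rbrakk> \<Longrightarrow> x = y"
proof -
  assume h: "iso2 a" "x \<in> Cel" "y \<in> Cel" "dm x = cd a" "dm y = cd a" "vc x a = vc y a"
  have "x = vc (vc x a) (inv2 a)" using h(1,2,4) by (simp add: iso2_cel)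
  also have "\<dots> = vc (vc y a) (inv2 a)" using h(6) by simp
  also have "\<dots> = y" using h(1,3,5) by (simp add: iso2_cel)
  finally show ?thesis .
qed

lemma iso2_cancel_left: "\<lbrakk>iso2 a; x \<in> Cel; y \<in> Cel; cd x = dm a; cd y = dm a; vc a x = vc a y\<rbrakk> \<Longrightarrow> x = y"
proof -
  assume h: "iso2 a" "x \<in> Cel" "y \<in> Cel" "cd x = dm a" "cd y = dm a" "vc a x = vc a y"
  have "x = vc (inv2 a) (vc a x)" using h(1,2,4) by simp
  also have "\<dots> = vc (inv2 a) (vc a y)" using h(6) by simp
  also have "\<dots> = y" using h(1,3,5) by (simp add: iso2_cel)
  finally show ?thesis .
qed

lemma vc_inv2_swap:
  assumes eq: "vc X U = vc V Y" and U: "iso2 U" and V: "iso2 V" and X: "X \<in> Cel" "dm X = cd U"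
    and Y: "Y \<in> Cel" "cd Y = dm V" "dm Y = dm U"
  shows "vc (inv2 V) X = vc Y (inv2 U)"
proof -
  have "vc (inv2 V) X = vc (inv2 V) (vc (vc X U) (inv2 U))" using U V X Y by (simp add: iso2_cel)
  also have "\<dots> = vc (inv2 V) (vc (vc V Y) (inv2 U))" using eq by simp
  also have "\<dots> = vc Y (inv2 U)" using U V X Y by (simp add: iso2_cel)
  finally show ?thesis .
qed

lemma whisker_left_eq:
  assumes eq: "vc b a = vc d c" and a: "a \<in> Cel" "dm a = A0" "cd a = B0" and b: "b \<in> Cel" "dm b = B0" "cd b = C0"
    and c: "c \<in> Cel" "dm c = A0" "cd c = D0" and d: "d \<in> Cel" "dm d = D0" "cd d = C0"
    and M: "M \<in> Mor" "sr M = tg A0" and Y: "Y \<in> Cel" "cd Y = hm M A0"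
  shows "vc (hc (ic M) b) (vc (hc (ic M) a) Y) = vc (hc (ic M) d) (vc (hc (ic M) c) Y)"
proof -
  have t: "tg B0 = tg A0" "tg C0 = tg A0" "tg D0 = tg A0" "A0 \<in> Mor" "B0 \<in> Mor" "C0 \<in> Mor" "D0 \<in> Mor"
    using cel_simps[OF a(1)] cel_simps[OF b(1)] cel_simps[OF c(1)] a b c by auto
  note facts = a b c d M Y t
  have "vc (hc (ic M) b) (vc (hc (ic M) a) Y) = vc (hc (ic M) (vc b a)) Y"
    using facts by (simp add: whisker_left_vc)
  also have "\<dots> = vc (hc (ic M) (vc d c)) Y" using eq by simp
  also have "\<dots> = vc (hc (ic M) d) (vc (hc (ic M) c) Y)"
    using facts by (simp add: whisker_left_vc)
  finally show ?thesis .
qed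

lemma whisker_right_eq:
  assumes eq: "vc b a = vc d c" and a: "a \<in> Cel" "dm a = A0" "cd a = B0" and b: "b \<in> Cel" "dm b = B0" "cd b = C0"
    and c: "c \<in> Cel" "dm c = A0" "cd c = D0" and d: "d \<in> Cel" "dm d = D0" "cd d = C0"
    and N: "N \<in> Mor" "sr A0 = tg N" and Y: "Y \<in> Cel" "cd Y = hm A0 N"
  shows "vc (hc b (ic N)) (vc (hc a (ic N)) Y) = vc (hc d (ic N)) (vc (hc c (ic N)) Y)"
proof -
  have t: "sr B0 = sr A0" "sr C0 = sr A0" "sr D0 = sr A0" "A0 \<in> Mor" "B0 \<in> Mor" "C0 \<in> Mor" "D0 \<in> Mor"
    using cel_simps[OF a(1)] cel_simps[OF b(1)] cel_simps[OF c(1)] a b c by auto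
  note facts = a b c d N Y t
  have "vc (hc b (ic N)) (vc (hc a (ic N)) Y) = vc (hc (vc b a) (ic N)) Y"
    using facts by (simp add: whisker_right_vc)
  also have "\<dots> = vc (hc (vc d c) (ic N)) Y" using eq by simp
  also have "\<dots> = vc (hc d (ic N)) (vc (hc c (ic N)) Y)"
    using facts by (simp add: whisker_right_vc)
  finally show ?thesis .
qed

section \<open>Consequences of the coherence axioms\<close>

lemma whisker_unit_left_inj:
  assumes "x \<in> Cel" "y \<in> Cel" "dm x = dm y" "cd x = cd y"
    "hc (ic (un (tg (dm x)))) x = hc (ic (un (tg (dm x)))) y"
  shows "x = y"
proof -
  have "vc x (lu (dm x)) = vc (lu (cd x)) (hc (ic (un (tg (dm x)))) x)" by (rule lu_nat[OF assms(1)])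
  also have "\<dots> = vc (lu (cd y)) (hc (ic (un (tg (dm y)))) y)" using assms by simp
  also have "\<dots> = vc y (lu (dm y))" by (rule lu_nat[OF assms(2), symmetric])
  finally have e: "vc x (lu (dm x)) = vc y (lu (dm x))" using assms(3) by simp
  show ?thesis by (rule iso2_cancel_right[OF _ assms(1,2) _ _ e]) (use assms in simp_all)
qed

lemma whisker_unit_right_inj:
  assumes "x \<in> Cel" "y \<in> Cel" "dm x = dm y" "cd x = cd y"
    "hc x (ic (un (sr (dm x)))) = hc y (ic (un (sr (dm x))))"
  shows "x = y"
proof -
  have "vc x (ru (dm x)) = vc (ru (cd x)) (hc x (ic (un (sr (dm x)))))" by (rule ru_nat[OF assms(1)])
  also have "\<dots> = vc (ru (cd y)) (hc y (ic (un (sr (dm y)))))" using assms by simp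
  also have "\<dots> = vc y (ru (dm y))" by (rule ru_nat[OF assms(2), symmetric])
  finally have e: "vc x (ru (dm x)) = vc y (ru (dm x))" using assms(3) by simp
  show ?thesis by (rule iso2_cancel_right[OF _ assms(1,2) _ _ e]) (use assms in simp_all)
qed

lemma lu_hm_asc:
  assumes M: "M \<in> Mor" and N: "N \<in> Mor" and MN: "sr M = tg N"
  shows "vc (lu (hm M N)) (asc (un (tg M)) M N) = hc (lu M) (ic N)"
proof -
  define z where "z = tg M"
  define I where "I = un z"
  have z: "z \<in> Ob" using M z_def by simp
  have I: "I \<in> Mor" "sr I = z" "tg I = z" using z I_def by auto
  note facts = M N MN I z_def[symmetric] I_def[symmetric]
  have tri: "hc (ru I) (ic M) = vc (hc (ic I) (lu M)) (asc I I M)"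
    using triangle[of I M] by (simp add: facts)
  let ?E = "vc (asc I (hm I M) N) (hc (asc I I M) (ic N))"
  have E: "iso2 ?E" "dm ?E = hm (hm (hm I I) M) N" by (simp_all add: facts)
  have "vc (hc (ic I) (vc (lu (hm M N)) (asc I M N))) ?E
      = vc (hc (ic I) (lu (hm M N))) (vc (hc (ic I) (asc I M N)) ?E)"
    by (simp add: whisker_left_vc facts)
  also have "\<dots> = vc (hc (ic I) (lu (hm M N))) (vc (asc I I (hm M N)) (asc (hm I I) M N))"
    using pentagon[of I I M N] by (simp add: facts)
  also have "\<dots> = vc (hc (ru I) (ic (hm M N))) (asc (hm I I) M N)"
    using vc_subst_prefix[OF triangle[of I "hm M N"]] by (simp add: facts)
  also have "\<dots> = vc (asc I M N) (hc (hc (ru I) (ic M)) (ic N))"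
    using asc_nat[of "ru I" "ic M" "ic N"] by (simp add: facts)
  also have "\<dots> = vc (asc I M N) (vc (hc (hc (ic I) (lu M)) (ic N)) (hc (asc I I M) (ic N)))"
    by (subst tri) (simp add: whisker_right_vc facts)
  also have "\<dots> = vc (hc (ic I) (hc (lu M) (ic N))) ?E"
    using vc_subst_prefix[OF asc_nat[of "ic I" "lu M" "ic N"]] by (simp add: facts)
  finally have e: "vc (hc (ic I) (vc (lu (hm M N)) (asc I M N))) ?E = vc (hc (ic I) (hc (lu M) (ic N))) ?E" .
  have "hc (ic I) (vc (lu (hm M N)) (asc I M N)) = hc (ic I) (hc (lu M) (ic N))"
    by (rule iso2_cancel_right[OF E(1) _ _ _ _ e]) (simp_all add: facts)
  note h = this
  have "vc (lu (hm M N)) (asc I M N) = hc (lu M) (ic N)"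
    by (rule whisker_unit_left_inj) (use h in \<open>simp_all add: facts\<close>)
  then show ?thesis by (simp add: facts)
qed

lemma ru_hm_asc:
  assumes M: "M \<in> Mor" and N: "N \<in> Mor" and MN: "sr M = tg N"
  shows "vc (hc (ic M) (ru N)) (asc M N (un (sr N))) = ru (hm M N)"
proof -
  define w where "w = sr N"
  define I where "I = un w"
  have w: "w \<in> Ob" using N w_def by simp
  have I: "I \<in> Mor" "sr I = w" "tg I = w" using w I_def by auto
  note facts = M N MN I w_def[symmetric] I_def[symmetric]
  have tri: "hc (ru (hm M N)) (ic I) = vc (hc (ic (hm M N)) (lu I)) (asc (hm M N) I I)"
    using triangle[of "hm M N" I] by (simp add: facts)
  have t2': "vc (hc (ic M) (hc (ic N) (lu I))) (hc (ic M) (asc N I I)) = hc (ic M) (hc (ru N) (ic I))"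
  proof -
    have "vc (hc (ic M) (hc (ic N) (lu I))) (hc (ic M) (asc N I I)) = hc (ic M) (vc (hc (ic N) (lu I)) (asc N I I))"
      by (rule whisker_left_vc[symmetric]) (simp_all add: facts)
    also have "\<dots> = hc (ic M) (hc (ru N) (ic I))" using triangle[of N I] by (simp add: facts)
    finally show ?thesis .
  qed
  have "vc (asc M N I) (hc (ru (hm M N)) (ic I))
     = vc (asc M N I) (vc (hc (ic (hm M N)) (lu I)) (asc (hm M N) I I))"
    by (subst tri) (simp add: facts)
  also have "\<dots> = vc (hc (ic M) (hc (ic N) (lu I))) (vc (asc M N (hm I I)) (asc (hm M N) I I))"
    using vc_subst_prefix[OF asc_nat[of "ic M" "ic N" "lu I"]] by (simp add: facts)
  also have "\<dots> = vc (hc (ic M) (hc (ic N) (lu I))) (vc (hc (ic M) (asc N I I)) (vc (asc M (hm N I) I) (hc (asc M N I) (ic I))))"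
    using pentagon[of M N I I] by (simp add: facts)
  also have "\<dots> = vc (hc (ic M) (hc (ru N) (ic I))) (vc (asc M (hm N I) I) (hc (asc M N I) (ic I)))"
    using vc_subst_prefix[OF t2'] by (simp add: facts)
  also have "\<dots> = vc (asc M N I) (vc (hc (hc (ic M) (ru N)) (ic I)) (hc (asc M N I) (ic I)))"
    using vc_subst_prefix[OF asc_nat[of "ic M" "ru N" "ic I", symmetric]] by (simp add: facts)
  also have "\<dots> = vc (asc M N I) (hc (vc (hc (ic M) (ru N)) (asc M N I)) (ic I))"
    by (simp add: facts whisker_right_vc)
  finally have e: "vc (asc M N I) (hc (ru (hm M N)) (ic I)) = vc (asc M N I) (hc (vc (hc (ic M) (ru N)) (asc M N I)) (ic I))" .
  have h: "hc (ru (hm M N)) (ic I) = hc (vc (hc (ic M) (ru N)) (asc M N I)) (ic I)"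
    by (rule iso2_cancel_left[OF _ _ _ _ _ e]) (simp_all add: facts)
  have "ru (hm M N) = vc (hc (ic M) (ru N)) (asc M N I)"
    by (rule whisker_unit_right_inj) (use h in \<open>simp_all add: facts\<close>)
  then show ?thesis by (simp add: facts)
qed

lemma lu_un_eq_ru_un:
  assumes x: "x \<in> Ob"
  shows "lu (un x) = ru (un x)"
proof -
  define I where "I = un x"
  have I: "I \<in> Mor" "sr I = x" "tg I = x" using x I_def by auto
  note facts = x I I_def[symmetric]
  have "vc (lu I) (lu (hm I I)) = vc (lu I) (hc (ic I) (lu I))"
    using lu_nat[of "lu I"] by (simp add: facts)
  then have l2: "lu (hm I I) = hc (ic I) (lu I)"
    by (rule iso2_cancel_left[rotated 5]) (simp_all add: facts)
  have "hc (lu I) (ic I) = vc (lu (hm I I)) (asc I I I)"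
    using lu_hm_asc[of I I] by (simp add: facts)
  also have "\<dots> = vc (hc (ic I) (lu I)) (asc I I I)" by (simp only: l2)
  also have "\<dots> = hc (ru I) (ic I)" using triangle[of I I] by (simp add: facts)
  finally have h: "hc (lu I) (ic I) = hc (ru I) (ic I)" .
  have "lu I = ru I" by (rule whisker_unit_right_inj) (use h in \<open>simp_all add: facts\<close>)
  then show ?thesis by (simp add: I_def)
qed

lemma hc_inv2_ic[simp]: "\<lbrakk>iso2 a; N \<in> Mor; sr (dm a) = tg N\<rbrakk> \<Longrightarrow> hc (inv2 a) (ic N) = inv2 (hc a (ic N))"
  by (simp add: inv2_hc iso2_cel)

lemma hc_ic_inv2[simp]: "\<lbrakk>iso2 a; M \<in> Mor; sr M = tg (dm a)\<rbrakk> \<Longrightarrow> hc (ic M) (inv2 a) = inv2 (hc (ic M) a)"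
  by (simp add: inv2_hc iso2_cel)

lemma lu_hm_inv_asc:
  assumes M: "M \<in> Mor" and N: "N \<in> Mor" and MN: "sr M = tg N"
  shows "vc (hc (lu M) (ic N)) (inv2 (asc (un (tg M)) M N)) = lu (hm M N)"
proof -
  have "vc (hc (lu M) (ic N)) (inv2 (asc (un (tg M)) M N)) = vc (vc (lu (hm M N)) (asc (un (tg M)) M N)) (inv2 (asc (un (tg M)) M N))"
    using lu_hm_asc[OF assms] by simp
  also have "\<dots> = lu (hm M N)" using assms by simp
  finally show ?thesis .
qed

lemma inv2_ru_hm:
  assumes M: "M \<in> Mor" and N: "N \<in> Mor" and MN: "sr M = tg N"
  shows "vc (inv2 (asc M N (un (sr N)))) (inv2 (hc (ic M) (ru N))) = inv2 (ru (hm M N))"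
proof -
  have "inv2 (ru (hm M N)) = inv2 (vc (hc (ic M) (ru N)) (asc M N (un (sr N))))"
    using ru_hm_asc[OF assms] by simp
  also have "\<dots> = vc (inv2 (asc M N (un (sr N)))) (inv2 (hc (ic M) (ru N)))"
    using assms by (simp add: inv2_vc)
  finally show ?thesis by simp
qed

lemma ru_hm_inv_asc:
  assumes M: "M \<in> Mor" and N: "N \<in> Mor" and MN: "sr M = tg N"
  shows "vc (ru (hm M N)) (inv2 (asc M N (un (sr N)))) = hc (ic M) (ru N)"
proof -
  have "vc (ru (hm M N)) (inv2 (asc M N (un (sr N)))) = vc (vc (hc (ic M) (ru N)) (asc M N (un (sr N)))) (inv2 (asc M N (un (sr N))))"
    using ru_hm_asc[OF assms] by simp
  also have "\<dots> = hc (ic M) (ru N)" using assms by simp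
  finally show ?thesis .
qed

lemma ru_nat_inv: "a \<in> Cel \<Longrightarrow> vc (inv2 (ru (cd a))) a = vc (hc a (ic (un (sr (dm a))))) (inv2 (ru (dm a)))"
proof -
  assume a: "a \<in> Cel"
  have "vc (inv2 (ru (cd a))) a = vc (inv2 (ru (cd a))) (vc (vc a (ru (dm a))) (inv2 (ru (dm a))))" using a by simp
  also have "\<dots> = vc (inv2 (ru (cd a))) (vc (vc (ru (cd a)) (hc a (ic (un (sr (dm a)))))) (inv2 (ru (dm a))))"
    using ru_nat[OF a] by simp
  also have "\<dots> = vc (hc a (ic (un (sr (dm a))))) (inv2 (ru (dm a)))" using a by simp
  finally show ?thesis .
qed

lemma lu_nat_inv: "a \<in> Cel \<Longrightarrow> vc (inv2 (lu (cd a))) a = vc (hc (ic (un (tg (dm a)))) a) (inv2 (lu (dm a)))"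
proof -
  assume a: "a \<in> Cel"
  have "vc (inv2 (lu (cd a))) a = vc (inv2 (lu (cd a))) (vc (vc a (lu (dm a))) (inv2 (lu (dm a))))" using a by simp
  also have "\<dots> = vc (inv2 (lu (cd a))) (vc (vc (lu (cd a)) (hc (ic (un (tg (dm a)))) a)) (inv2 (lu (dm a))))"
    using lu_nat[OF a] by simp
  also have "\<dots> = vc (hc (ic (un (tg (dm a)))) a) (inv2 (lu (dm a)))" using a by simp
  finally show ?thesis .
qed

lemma asc_nat_inv:
  assumes a: "a \<in> Cel" and b: "b \<in> Cel" and c: "c \<in> Cel" and ab: "sr (dm a) = tg (dm b)" and bc: "sr (dm b) = tg (dm c)"
  shows "vc (inv2 (asc (cd a) (cd b) (cd c))) (hc a (hc b c)) = vc (hc (hc a b) c) (inv2 (asc (dm a) (dm b) (dm c)))"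
proof -
  have "vc (inv2 (asc (cd a) (cd b) (cd c))) (hc a (hc b c))
      = vc (inv2 (asc (cd a) (cd b) (cd c))) (vc (vc (hc a (hc b c)) (asc (dm a) (dm b) (dm c))) (inv2 (asc (dm a) (dm b) (dm c))))"
    using assms by simp
  also have "\<dots> = vc (inv2 (asc (cd a) (cd b) (cd c))) (vc (vc (asc (cd a) (cd b) (cd c)) (hc (hc a b) c)) (inv2 (asc (dm a) (dm b) (dm c))))"
    using asc_nat[OF assms] by simp
  also have "\<dots> = vc (hc (hc a b) c) (inv2 (asc (dm a) (dm b) (dm c)))" using assms by simp
  finally show ?thesis .
qed

section \<open>Morphisms and isomorphisms in the centre\<close>

text \<open>The typing conditions of zobj alone, so that morphisms into or out of a pair can be
  used before it is known to be a centre object.\<close>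

definition ztyped :: "('o \<Rightarrow> 'm) \<times> ('m \<Rightarrow> 'c) \<Rightarrow> bool" where
  "ztyped Pp \<longleftrightarrow> (case Pp of (P, p) \<Rightarrow>
    (\<forall>x\<in>Ob. P x \<in> Mor \<and> sr (P x) = x \<and> tg (P x) = x) \<and>
    (\<forall>M\<in>Mor. p M \<in> Cel \<and> dm (p M) = hm (P (tg M)) M \<and> cd (p M) = hm M (P (sr M))))"

lemma ztypedD:
  assumes "ztyped (P, p)"
  shows "\<And>x. x \<in> Ob \<Longrightarrow> P x \<in> Mor" "\<And>x. x \<in> Ob \<Longrightarrow> sr (P x) = x" "\<And>x. x \<in> Ob \<Longrightarrow> tg (P x) = x"
    "\<And>M. M \<in> Mor \<Longrightarrow> p M \<in> Cel" "\<And>M. M \<in> Mor \<Longrightarrow> dm (p M) = hm (P (tg M)) M"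
    "\<And>M. M \<in> Mor \<Longrightarrow> cd (p M) = hm M (P (sr M))"
  using assms by (auto simp: ztyped_def)

lemma zobj_typed: "zobj Pp \<Longrightarrow> ztyped Pp"
  unfolding zobj_def ztyped_def by (auto split: prod.splits simp: iso2_cel)

lemma zobjD:
  assumes "zobj (P, p)"
  shows "\<And>M. M \<in> Mor \<Longrightarrow> iso2 (p M)"
    "\<And>a. a \<in> Cel \<Longrightarrow> vc (p (cd a)) (hc (ic (P (tg (dm a)))) a) = vc (hc a (ic (P (sr (dm a))))) (p (dm a))"
    "\<And>x. x \<in> Ob \<Longrightarrow> p (un x) = vc (inv2 (lu (P x))) (ru (P x))"
    "\<And>M N. \<lbrakk>M \<in> Mor; N \<in> Mor; sr M = tg N\<rbrakk> \<Longrightarrow>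
       p (hm M N) = vc (inv2 (asc M N (P (sr N))))
                     (vc (hc (ic M) (p N))
                      (vc (asc M (P (sr M)) N)
                       (vc (hc (p M) (ic N))
                        (inv2 (asc (P (tg M)) M N)))))"
  using assms unfolding zobj_def by auto

lemma zobjI:
  assumes "ztyped (P, p)" "\<And>M. M \<in> Mor \<Longrightarrow> iso2 (p M)"
    "\<And>a. a \<in> Cel \<Longrightarrow> vc (p (cd a)) (hc (ic (P (tg (dm a)))) a) = vc (hc a (ic (P (sr (dm a))))) (p (dm a))"
    "\<And>x. x \<in> Ob \<Longrightarrow> p (un x) = vc (inv2 (lu (P x))) (ru (P x))"
    "\<And>M N. \<lbrakk>M \<in> Mor; N \<in> Mor; sr M = tg N\<rbrakk> \<Longrightarrow>
       p (hm M N) = vc (inv2 (asc M N (P (sr N))))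
                     (vc (hc (ic M) (p N))
                      (vc (asc M (P (sr M)) N)
                       (vc (hc (p M) (ic N))
                        (inv2 (asc (P (tg M)) M N)))))"
  shows "zobj (P, p)"
  using assms unfolding zobj_def ztyped_def by auto

lemma zhom_iff: "zhom (P, p) (Q, q) h \<longleftrightarrow> (\<forall>x\<in>Ob. h x \<in> Cel \<and> dm (h x) = P x \<and> cd (h x) = Q x) \<and>
    (\<forall>M\<in>Mor. vc (q M) (hc (h (tg M)) (ic M)) = vc (hc (ic M) (h (sr M))) (p M))"
  by (simp add: zhom_def)

lemma zhomD:
  assumes "zhom (P, p) (Q, q) h"
  shows "\<And>x. x \<in> Ob \<Longrightarrow> h x \<in> Cel" "\<And>x. x \<in> Ob \<Longrightarrow> dm (h x) = P x" "\<And>x. x \<in> Ob \<Longrightarrow> cd (h x) = Q x"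
    "\<And>M. M \<in> Mor \<Longrightarrow> vc (q M) (hc (h (tg M)) (ic M)) = vc (hc (ic M) (h (sr M))) (p M)"
  using assms by (auto simp: zhom_iff)

text \<open>An isomorphism h from a typed pair (P, p) onto a centre object (Q, q) makes (P, p)
  a centre object: p is q conjugated by h.\<close>

context
  fixes P :: "'o \<Rightarrow> 'm" and p :: "'m \<Rightarrow> 'c" and Q :: "'o \<Rightarrow> 'm" and q :: "'m \<Rightarrow> 'c"
    and h :: "'o \<Rightarrow> 'c"
  assumes Z: "zobj (Q, q)" and T: "ztyped (P, p)"
    and h: "\<And>x. x \<in> Ob \<Longrightarrow> iso2 (h x)" "\<And>x. x \<in> Ob \<Longrightarrow> dm (h x) = P x" "\<And>x. x \<in> Ob \<Longrightarrow> cd (h x) = Q x"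
    and hom: "\<And>M. M \<in> Mor \<Longrightarrow> vc (q M) (hc (h (tg M)) (ic M)) = vc (hc (ic M) (h (sr M))) (p M)"
begin

private lemma transport_conj:
  assumes M: "M \<in> Mor"
  shows "p M = vc (inv2 (hc (ic M) (h (sr M)))) (vc (q M) (hc (h (tg M)) (ic M)))"
proof -
  note [simp] = ztypedD[OF T] ztypedD[OF zobj_typed[OF Z]] h iso2_cel[OF h(1)] zobjD(1)[OF Z]
  have "p M = vc (inv2 (hc (ic M) (h (sr M)))) (vc (hc (ic M) (h (sr M))) (p M))" using M by simp
  also have "\<dots> = vc (inv2 (hc (ic M) (h (sr M)))) (vc (q M) (hc (h (tg M)) (ic M)))"
    using hom[OF M] by simp
  finally show ?thesis .
qed

private lemma transport_nat:
  assumes a: "a \<in> Cel"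
  shows "vc (p (cd a)) (hc (ic (P (tg (dm a)))) a) = vc (hc a (ic (P (sr (dm a))))) (p (dm a))"
proof -
  note [simp] = ztypedD[OF T] ztypedD[OF zobj_typed[OF Z]] h iso2_cel[OF h(1)] zobjD(1)[OF Z]
  let ?A = "dm a" and ?A' = "cd a" and ?t = "tg (dm a)" and ?s = "sr (dm a)"
  have sl1: "vc (hc (h ?t) (ic ?A')) (hc (ic (P ?t)) a) = vc (hc (ic (Q ?t)) a) (hc (h ?t) (ic ?A))"
    using hc_slide[of "h ?t" a] a by simp
  have sl2: "vc (inv2 (hc (ic ?A') (h ?s))) (hc a (ic (Q ?s))) = vc (hc a (ic (P ?s))) (inv2 (hc (ic ?A) (h ?s)))"
    by (rule vc_inv2_swap) (use hc_slide[of a "h ?s"] a in simp_all)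
  have "vc (p ?A') (hc (ic (P ?t)) a) = vc (inv2 (hc (ic ?A') (h ?s))) (vc (q ?A') (vc (hc (h ?t) (ic ?A')) (hc (ic (P ?t)) a)))"
    using a by (subst transport_conj) simp_all
  also have "\<dots> = vc (inv2 (hc (ic ?A') (h ?s))) (vc (q ?A') (vc (hc (ic (Q ?t)) a) (hc (h ?t) (ic ?A))))"
    using sl1 by simp
  also have "\<dots> = vc (inv2 (hc (ic ?A') (h ?s))) (vc (hc a (ic (Q ?s))) (vc (q ?A) (hc (h ?t) (ic ?A))))"
    using vc_subst_prefix[OF zobjD(2)[OF Z a]] a by simp
  also have "\<dots> = vc (hc a (ic (P ?s))) (vc (inv2 (hc (ic ?A) (h ?s))) (vc (q ?A) (hc (h ?t) (ic ?A))))"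
    using vc_subst_prefix[OF sl2] a by simp
  also have "\<dots> = vc (hc a (ic (P ?s))) (p ?A)"
    using a by (simp add: transport_conj[of "dm a"])
  finally show ?thesis .
qed

private lemma transport_unit:
  assumes x: "x \<in> Ob"
  shows "p (un x) = vc (inv2 (lu (P x))) (ru (P x))"
proof -
  note [simp] = ztypedD[OF T] ztypedD[OF zobj_typed[OF Z]] h iso2_cel[OF h(1)] zobjD(1)[OF Z]
  let ?I = "un x"
  have r: "vc (ru (Q x)) (hc (h x) (ic ?I)) = vc (h x) (ru (P x))"
    using ru_nat[of "h x"] x by simp
  have l: "vc (inv2 (lu (Q x))) (h x) = vc (hc (ic ?I) (h x)) (inv2 (lu (P x)))"
    using lu_nat_inv[of "h x"] x by simp
  have "p ?I = vc (inv2 (hc (ic ?I) (h x))) (vc (inv2 (lu (Q x))) (vc (ru (Q x)) (hc (h x) (ic ?I))))"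
    using x zobjD(3)[OF Z x] by (subst transport_conj) simp_all
  also have "\<dots> = vc (inv2 (hc (ic ?I) (h x))) (vc (inv2 (lu (Q x))) (vc (h x) (ru (P x))))"
    using r by simp
  also have "\<dots> = vc (inv2 (hc (ic ?I) (h x))) (vc (hc (ic ?I) (h x)) (vc (inv2 (lu (P x))) (ru (P x))))"
    using vc_subst_prefix[OF l] x by simp
  also have "\<dots> = vc (inv2 (lu (P x))) (ru (P x))" using x by simp
  finally show ?thesis .
qed

private lemma transport_hexagon_conj:
  assumes mn: "M \<in> Mor" "N \<in> Mor" "sr M = tg N"
  shows "vc (hc (ic (hm M N)) (h (sr N)))
           (vc (inv2 (asc M N (P (sr N)))) (vc (hc (ic M) (p N)) (vc (asc M (P (sr M)) N)
              (vc (hc (p M) (ic N)) (inv2 (asc (P (tg M)) M N))))))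
         = vc (q (hm M N)) (hc (h (tg M)) (ic (hm M N)))"
proof -
  note [simp] = ztypedD[OF T] ztypedD[OF zobj_typed[OF Z]] h iso2_cel[OF h(1)] zobjD(1)[OF Z]
  let ?s = "sr N" and ?m = "sr M" and ?t = "tg M"
  have c1: "vc (hc (ic (hm M N)) (h ?s)) (inv2 (asc M N (P ?s))) = vc (inv2 (asc M N (Q ?s))) (hc (ic M) (hc (ic N) (h ?s)))"
    using asc_nat_inv[of "ic M" "ic N" "h ?s"] mn by simp
  have c2: "vc (hc (ic M) (hc (ic N) (h ?s))) (vc (hc (ic M) (p N)) W) = vc (hc (ic M) (q N)) (vc (hc (ic M) (hc (h ?m) (ic N))) W)"
    if "W \<in> Cel" "cd W = hm M (hm (P ?m) N)" for W
    by (rule whisker_left_eq[OF hom[OF mn(2), symmetric, unfolded mn(3)[symmetric]]]) (use that mn in simp_all)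
  have c3: "vc (hc (ic M) (hc (h ?m) (ic N))) (asc M (P ?m) N) = vc (asc M (Q ?m) N) (hc (hc (ic M) (h ?m)) (ic N))"
    using asc_nat[of "ic M" "h ?m" "ic N"] mn by simp
  have c4: "vc (hc (hc (ic M) (h ?m)) (ic N)) (vc (hc (p M) (ic N)) W) = vc (hc (q M) (ic N)) (vc (hc (hc (h ?t) (ic M)) (ic N)) W)"
    if "W \<in> Cel" "cd W = hm (hm (P ?t) M) N" for W
    by (rule whisker_right_eq[OF hom[OF mn(1), symmetric]]) (use that mn in simp_all)
  have c5: "vc (hc (hc (h ?t) (ic M)) (ic N)) (inv2 (asc (P ?t) M N)) = vc (inv2 (asc (Q ?t) M N)) (hc (h ?t) (ic (hm M N)))"
    using asc_nat_inv[of "h ?t" "ic M" "ic N"] mn by simp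
  have "vc (hc (ic (hm M N)) (h ?s)) (vc (inv2 (asc M N (P ?s))) (vc (hc (ic M) (p N)) (vc (asc M (P ?m) N)
          (vc (hc (p M) (ic N)) (inv2 (asc (P ?t) M N))))))
      = vc (inv2 (asc M N (Q ?s))) (vc (hc (ic M) (hc (ic N) (h ?s))) (vc (hc (ic M) (p N)) (vc (asc M (P ?m) N)
          (vc (hc (p M) (ic N)) (inv2 (asc (P ?t) M N))))))"
    using vc_subst_prefix[OF c1] mn by simp
  also have "\<dots> = vc (inv2 (asc M N (Q ?s))) (vc (hc (ic M) (q N)) (vc (hc (ic M) (hc (h ?m) (ic N))) (vc (asc M (P ?m) N)
          (vc (hc (p M) (ic N)) (inv2 (asc (P ?t) M N))))))"
    using mn by (subst c2) simp_all
  also have "\<dots> = vc (inv2 (asc M N (Q ?s))) (vc (hc (ic M) (q N)) (vc (asc M (Q ?m) N) (vc (hc (hc (ic M) (h ?m)) (ic N))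
          (vc (hc (p M) (ic N)) (inv2 (asc (P ?t) M N))))))"
    using vc_subst_prefix[OF c3] mn by simp
  also have "\<dots> = vc (inv2 (asc M N (Q ?s))) (vc (hc (ic M) (q N)) (vc (asc M (Q ?m) N) (vc (hc (q M) (ic N))
          (vc (hc (hc (h ?t) (ic M)) (ic N)) (inv2 (asc (P ?t) M N))))))"
    using mn by (subst c4) simp_all
  also have "\<dots> = vc (q (hm M N)) (hc (h ?t) (ic (hm M N)))"
    using c5 zobjD(4)[OF Z mn] mn by simp
  finally show ?thesis .
qed

lemma zobj_transport: "zobj (P, p)"
proof (rule zobjI[OF T])
  note [simp] = ztypedD[OF T] ztypedD[OF zobj_typed[OF Z]] h iso2_cel[OF h(1)] zobjD(1)[OF Z]
  show "iso2 (p M)" if "M \<in> Mor" for M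
    using that by (subst transport_conj) simp_all
  fix M N assume mn: "M \<in> Mor" "N \<in> Mor" "sr M = tg N"
  let ?RP = "vc (inv2 (asc M N (P (sr N)))) (vc (hc (ic M) (p N)) (vc (asc M (P (sr M)) N)
          (vc (hc (p M) (ic N)) (inv2 (asc (P (tg M)) M N)))))"
  have "p (hm M N) = vc (inv2 (hc (ic (hm M N)) (h (sr N)))) (vc (q (hm M N)) (hc (h (tg M)) (ic (hm M N))))"
    using transport_conj[of "hm M N"] mn by simp
  also have "\<dots> = vc (inv2 (hc (ic (hm M N)) (h (sr N)))) (vc (hc (ic (hm M N)) (h (sr N))) ?RP)"
    by (simp only: transport_hexagon_conj[OF mn])
  also have "\<dots> = ?RP" using mn by simp
  finally show "p (hm M N) = ?RP" .
qed (use transport_nat transport_unit in simp_all)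

end

lemma zhom_comp:
  assumes hh: "zhom (P, p) (Q, q) h" and kk: "zhom (Q, q) (R, r) k"
    and TP: "ztyped (P, p)" and TQ: "ztyped (Q, q)" and TR: "ztyped (R, r)"
  shows "zhom (P, p) (R, r) (\<lambda>x. vc (k x) (h x))"
proof -
  note [simp] = ztypedD[OF TP] ztypedD[OF TQ] ztypedD[OF TR] zhomD(1-3)[OF hh] zhomD(1-3)[OF kk]
  have "vc (r M) (hc (vc (k (tg M)) (h (tg M))) (ic M)) = vc (hc (ic M) (vc (k (sr M)) (h (sr M)))) (p M)"
    if M: "M \<in> Mor" for M
  proof -
    have "vc (r M) (hc (vc (k (tg M)) (h (tg M))) (ic M)) = vc (r M) (vc (hc (k (tg M)) (ic M)) (hc (h (tg M)) (ic M)))"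
      using M by (simp add: whisker_right_vc)
    also have "\<dots> = vc (hc (ic M) (k (sr M))) (vc (q M) (hc (h (tg M)) (ic M)))"
      using vc_subst_prefix[OF zhomD(4)[OF kk M]] M by simp
    also have "\<dots> = vc (hc (ic M) (k (sr M))) (vc (hc (ic M) (h (sr M))) (p M))"
      using zhomD(4)[OF hh M] by simp
    also have "\<dots> = vc (hc (ic M) (vc (k (sr M)) (h (sr M)))) (p M)"
      using M by (simp add: whisker_left_vc)
    finally show ?thesis .
  qed
  then show ?thesis by (auto simp: zhom_iff)
qed

lemma zhom_inv:
  assumes hh: "zhom (P, p) (Q, q) h" and iso: "\<And>x. x \<in> Ob \<Longrightarrow> iso2 (h x)"
    and TP: "ztyped (P, p)" and TQ: "ztyped (Q, q)"
  shows "zhom (Q, q) (P, p) (\<lambda>x. inv2 (h x))"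
proof -
  note [simp] = ztypedD[OF TP] ztypedD[OF TQ] zhomD(1-3)[OF hh] iso
  have "vc (p M) (hc (inv2 (h (tg M))) (ic M)) = vc (hc (ic M) (inv2 (h (sr M)))) (q M)"
    if M: "M \<in> Mor" for M
  proof -
    have "vc (inv2 (hc (ic M) (h (sr M)))) (q M) = vc (p M) (inv2 (hc (h (tg M)) (ic M)))"
      by (rule vc_inv2_swap[OF zhomD(4)[OF hh M]]) (use M in simp_all)
    then show ?thesis using M by simp
  qed
  then show ?thesis by (auto simp: zhom_iff)
qed

lemma zhom_id:
  assumes TP: "ztyped (P, p)"
  shows "zhom (P, p) (P, p) (\<lambda>x. ic (P x))"
proof -
  note [simp] = ztypedD[OF TP]
  show ?thesis by (auto simp: zhom_iff)
qed

lemma zisomI: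
  assumes A: "zobj (P, p)" and B: "zobj (Q, q)" and hh: "zhom (P, p) (Q, q) h"
    and iso: "\<And>x. x \<in> Ob \<Longrightarrow> iso2 (h x)"
  shows "zisom (P, p) (Q, q)"
proof -
  have "zhom (Q, q) (P, p) (\<lambda>x. inv2 (h x))"
    by (rule zhom_inv[OF hh iso zobj_typed[OF A] zobj_typed[OF B]])
  moreover have "\<forall>x\<in>Ob. vc (inv2 (h x)) (h x) = ic (P x) \<and> vc (h x) (inv2 (h x)) = ic (Q x)"
    using iso zhomD(2,3)[OF hh] by simp
  ultimately show ?thesis using A B hh unfolding zisom_def by auto
qed

lemma zisomD:
  assumes "zisom (P, p) (Q, q)"
  shows "zobj (P, p)" "zobj (Q, q)" "\<exists>h. zhom (P, p) (Q, q) h \<and> (\<forall>x\<in>Ob. iso2 (h x))"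
proof -
  show "zobj (P, p)" "zobj (Q, q)" using assms by (auto simp: zisom_def)
  obtain f g where f: "zhom (P, p) (Q, q) f" and g: "zhom (Q, q) (P, p) g"
    and fg: "\<forall>x\<in>Ob. vc (g x) (f x) = ic (P x) \<and> vc (f x) (g x) = ic (Q x)"
    using assms by (auto simp: zisom_def)
  have "iso2 (f x)" if x: "x \<in> Ob" for x
    by (rule iso2I[of _ "g x"]) (use zhomD[OF f] zhomD[OF g] fg x in auto)
  then show "\<exists>h. zhom (P, p) (Q, q) h \<and> (\<forall>x\<in>Ob. iso2 (h x))" using f by blast
qed

lemma zisom_refl: "zobj A \<Longrightarrow> zisom A A"
proof -
  assume A: "zobj A"
  obtain P p where e: "A = (P, p)" by (cases A)
  have T: "ztyped (P, p)" using zobj_typed A e by simp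
  show ?thesis using zisomI[OF A[unfolded e] A[unfolded e] zhom_id[OF T]] ztypedD(1)[OF T] e by simp
qed

lemma zisom_sym: "zisom A C \<Longrightarrow> zisom C A"
  unfolding zisom_def by blast

lemma zisom_trans: "zisom A C \<Longrightarrow> zisom C D \<Longrightarrow> zisom A D"
proof -
  assume 1: "zisom A C" and 2: "zisom C D"
  obtain P p where A: "A = (P, p)" by (cases A)
  obtain Q q where C: "C = (Q, q)" by (cases C)
  obtain R r where D: "D = (R, r)" by (cases D)
  obtain h where h: "zhom (P, p) (Q, q) h" "\<forall>x\<in>Ob. iso2 (h x)" using zisomD(3) 1 A C by blast
  obtain k where k: "zhom (Q, q) (R, r) k" "\<forall>x\<in>Ob. iso2 (k x)" using zisomD(3) 2 C D by blast
  have o: "zobj (P, p)" "zobj (Q, q)" "zobj (R, r)" using zisomD 1 2 A C D by auto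
  have "zhom (P, p) (R, r) (\<lambda>x. vc (k x) (h x))"
    by (rule zhom_comp[OF h(1) k(1)]) (use o zobj_typed in auto)
  moreover have "\<forall>x\<in>Ob. iso2 (vc (k x) (h x))" using h k zhomD[OF h(1)] zhomD[OF k(1)] by simp
  ultimately show ?thesis using zisomI o A D by auto
qed

lemma zclass_eq: "zisom A C \<Longrightarrow> zclass A = zclass C"
  unfolding zclass_def using zisom_trans zisom_sym by blast

lemma zclass_mem: "zobj A \<Longrightarrow> A \<in> zclass A"
  unfolding zclass_def using zisom_refl by blast

lemma zclass_memD: "C \<in> zclass A \<Longrightarrow> zisom A C"
  unfolding zclass_def by blast

lemma ztensor_typed:
  assumes TP: "ztyped (P, p)" and TQ: "ztyped (Q, q)"
  shows "ztyped (ztensor (P, p) (Q, q))"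
  using ztypedD[OF TP] ztypedD[OF TQ] unfolding ztyped_def ztensor_def by simp

lemma ztensor_hom:
  assumes hA: "zhom (P, p) (P', p') a" and hC: "zhom (Q, q) (Q', q') c"
    and T1: "ztyped (P, p)" and T2: "ztyped (P', p')" and T3: "ztyped (Q, q)" and T4: "ztyped (Q', q')"
  shows "zhom (ztensor (P, p) (Q, q)) (ztensor (P', p') (Q', q')) (\<lambda>x. hc (a x) (c x))"
proof -
  note [simp] = ztypedD[OF T1] ztypedD[OF T2] ztypedD[OF T3] ztypedD[OF T4] zhomD(1-3)[OF hA] zhomD(1-3)[OF hC]
  have main: "vc (vc (asc M (P' (sr M)) (Q' (sr M))) (vc (hc (p' M) (ic (Q' (sr M)))) (vc (inv2 (asc (P' (tg M)) M (Q' (sr M))))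
             (vc (hc (ic (P' (tg M))) (q' M)) (asc (P' (tg M)) (Q' (tg M)) M)))))
          (hc (hc (a (tg M)) (c (tg M))) (ic M))
      = vc (hc (ic M) (hc (a (sr M)) (c (sr M))))
          (vc (asc M (P (sr M)) (Q (sr M))) (vc (hc (p M) (ic (Q (sr M)))) (vc (inv2 (asc (P (tg M)) M (Q (sr M))))
             (vc (hc (ic (P (tg M))) (q M)) (asc (P (tg M)) (Q (tg M)) M)))))"
    if M: "M \<in> Mor" for M
  proof -
    let ?s = "sr M" and ?t = "tg M"
    have e1: "vc (asc (P' ?t) (Q' ?t) M) (hc (hc (a ?t) (c ?t)) (ic M)) = vc (hc (a ?t) (hc (c ?t) (ic M))) (asc (P ?t) (Q ?t) M)"
      using asc_nat[of "a ?t" "c ?t" "ic M"] M by simp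
    have e2: "vc (hc (ic (P' ?t)) (q' M)) (hc (a ?t) (hc (c ?t) (ic M))) = vc (hc (a ?t) (hc (ic M) (c ?s))) (hc (ic (P ?t)) (q M))"
    proof -
      have "vc (hc (ic (P' ?t)) (q' M)) (hc (a ?t) (hc (c ?t) (ic M))) = hc (a ?t) (vc (q' M) (hc (c ?t) (ic M)))"
        using M by (simp add: vc_hc_interchange)
      also have "\<dots> = hc (a ?t) (vc (hc (ic M) (c ?s)) (q M))" using zhomD(4)[OF hC M] by simp
      also have "\<dots> = vc (hc (a ?t) (hc (ic M) (c ?s))) (hc (ic (P ?t)) (q M))"
        using M by (simp add: vc_hc_interchange)
      finally show ?thesis .
    qed
    have e3: "vc (inv2 (asc (P' ?t) M (Q' ?s))) (hc (a ?t) (hc (ic M) (c ?s))) = vc (hc (hc (a ?t) (ic M)) (c ?s)) (inv2 (asc (P ?t) M (Q ?s)))"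
      using asc_nat_inv[of "a ?t" "ic M" "c ?s"] M by simp
    have e4: "vc (hc (p' M) (ic (Q' ?s))) (hc (hc (a ?t) (ic M)) (c ?s)) = vc (hc (hc (ic M) (a ?s)) (c ?s)) (hc (p M) (ic (Q ?s)))"
    proof -
      have "vc (hc (p' M) (ic (Q' ?s))) (hc (hc (a ?t) (ic M)) (c ?s)) = hc (vc (p' M) (hc (a ?t) (ic M))) (c ?s)"
        using M by (simp add: vc_hc_interchange)
      also have "\<dots> = hc (vc (hc (ic M) (a ?s)) (p M)) (c ?s)" using zhomD(4)[OF hA M] by simp
      also have "\<dots> = vc (hc (hc (ic M) (a ?s)) (c ?s)) (hc (p M) (ic (Q ?s)))"
        using M by (simp add: vc_hc_interchange)
      finally show ?thesis .
    qed
    have e5: "vc (asc M (P' ?s) (Q' ?s)) (hc (hc (ic M) (a ?s)) (c ?s)) = vc (hc (ic M) (hc (a ?s) (c ?s))) (asc M (P ?s) (Q ?s))"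
      using asc_nat[of "ic M" "a ?s" "c ?s"] M by simp
    show ?thesis
      using M e1 vc_subst_prefix[OF e2] vc_subst_prefix[OF e3] vc_subst_prefix[OF e4] vc_subst_prefix[OF e5]
      by simp
  qed
  show ?thesis unfolding ztensor_def using main by (simp add: zhom_iff)
qed

section \<open>Centre objects over the identity 1-cells\<close>

lemma E11_carrier: "f \<in> carrier E11 \<longleftrightarrow> f \<in> extensional Mor \<and>
   (\<forall>M\<in>Mor. iso2 (f M) \<and> dm (f M) = M \<and> cd (f M) = M) \<and> (\<forall>a\<in>Cel. vc (f (cd a)) a = vc a (f (dm a)))"
  by (simp add: E11_def)

lemma Z11_iff: "f \<in> Z11 \<longleftrightarrow> f \<in> carrier E11 \<and>
   (\<forall>M\<in>Mor. \<forall>N\<in>Mor. sr M = tg N \<longrightarrow> f (hm M N) = hc (f M) (f N))"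
  by (simp add: Z11_def)

lemma E11D:
  assumes "f \<in> carrier E11"
  shows "f \<in> extensional Mor" "\<And>M. M \<in> Mor \<Longrightarrow> iso2 (f M)" "\<And>M. M \<in> Mor \<Longrightarrow> f M \<in> Cel"
    "\<And>M. M \<in> Mor \<Longrightarrow> dm (f M) = M" "\<And>M. M \<in> Mor \<Longrightarrow> cd (f M) = M"
    "\<And>a. a \<in> Cel \<Longrightarrow> vc (f (cd a)) a = vc a (f (dm a))"
  using assms by (auto simp: E11_carrier iso2_cel)

lemma Z11D:
  assumes "f \<in> Z11"
  shows "f \<in> carrier E11" "\<And>M N. \<lbrakk>M \<in> Mor; N \<in> Mor; sr M = tg N\<rbrakk> \<Longrightarrow> f (hm M N) = hc (f M) (f N)"
  using assms by (auto simp: Z11_iff)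

definition unit_braiding :: "('m \<Rightarrow> 'c) \<Rightarrow> 'm \<Rightarrow> 'c" where
  "unit_braiding f M = vc (inv2 (ru M)) (vc (f M) (lu M))"

lemma unit_braiding_simps[simp]:
  assumes "M \<in> Mor" "f M \<in> Cel" "dm (f M) = M" "cd (f M) = M"
  shows "unit_braiding f M \<in> Cel" "dm (unit_braiding f M) = hm (un (tg M)) M" "cd (unit_braiding f M) = hm M (un (sr M))"
  using assms by (simp_all add: unit_braiding_def)

lemma iso2_unit_braiding[simp]:
  assumes "M \<in> Mor" "iso2 (f M)" "dm (f M) = M" "cd (f M) = M"
  shows "iso2 (unit_braiding f M)"
  using assms by (simp add: unit_braiding_def iso2_cel)

lemma unit_braiding_hexagon:
  assumes M: "M \<in> Mor" and N: "N \<in> Mor" and MN: "sr M = tg N"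
    and fM: "f M \<in> Cel" "dm (f M) = M" "cd (f M) = M"
    and fN: "f N \<in> Cel" "dm (f N) = N" "cd (f N) = N"
  shows "vc (inv2 (asc M N (un (sr N)))) (vc (hc (ic M) (unit_braiding f N)) (vc (asc M (un (sr M)) N)
          (vc (hc (unit_braiding f M) (ic N)) (inv2 (asc (un (tg M)) M N)))))
       = vc (inv2 (ru (hm M N))) (vc (hc (f M) (f N)) (lu (hm M N)))"
proof -
  note facts = M N MN fM fN
  have "vc (inv2 (asc M N (un (sr N)))) (vc (hc (ic M) (unit_braiding f N)) (vc (asc M (un (sr M)) N)
          (vc (hc (unit_braiding f M) (ic N)) (inv2 (asc (un (tg M)) M N)))))
     = vc (inv2 (asc M N (un (sr N)))) (vc (inv2 (hc (ic M) (ru N))) (vc (hc (ic M) (f N))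
        (vc (hc (ic M) (lu N)) (vc (asc M (un (sr M)) N) (vc (inv2 (hc (ru M) (ic N)))
        (vc (hc (f M) (ic N)) (vc (hc (lu M) (ic N)) (inv2 (asc (un (tg M)) M N)))))))))"
    by (simp add: facts unit_braiding_def whisker_left_vc whisker_right_vc)
  also have "\<dots> = vc (inv2 (asc M N (un (sr N)))) (vc (inv2 (hc (ic M) (ru N))) (vc (hc (ic M) (f N))
        (vc (hc (f M) (ic N)) (vc (hc (lu M) (ic N)) (inv2 (asc (un (tg M)) M N))))))"
    using vc_subst_prefix[OF triangle[of M N]] by (simp add: facts)
  also have "\<dots> = vc (inv2 (ru (hm M N))) (vc (hc (ic M) (f N))
        (vc (hc (f M) (ic N)) (vc (hc (lu M) (ic N)) (inv2 (asc (un (tg M)) M N)))))"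
    using vc_subst_prefix[OF inv2_ru_hm[OF M N MN]] by (simp add: facts)
  also have "\<dots> = vc (inv2 (ru (hm M N))) (vc (hc (f M) (f N)) (lu (hm M N)))"
    using vc_subst_prefix[OF hc_whiskers_left_after_right[of "f M" "f N", symmetric]] lu_hm_inv_asc[OF M N MN] by (simp add: facts)
  finally show ?thesis .
qed

lemma unit_braiding_cancel:
  assumes M: "M \<in> Mor" and x: "x \<in> Cel" "dm x = M" "cd x = M" and y: "y \<in> Cel" "dm y = M" "cd y = M"
    and e: "vc (inv2 (ru M)) (vc x (lu M)) = vc (inv2 (ru M)) (vc y (lu M))"
  shows "x = y"
proof -
  have "vc x (lu M) = vc y (lu M)"
    by (rule iso2_cancel_left[OF _ _ _ _ _ e]) (use assms in simp_all)
  then show ?thesis by (rule iso2_cancel_right[rotated 5]) (use assms in simp_all)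
qed

lemma Z11_unit:
  assumes f: "f \<in> Z11" and x: "x \<in> Ob"
  shows "f (un x) = ic (un x)"
proof -
  define I where "I = un x"
  have I: "I \<in> Mor" "sr I = x" "tg I = x" using x I_def by auto
  \<comment> \<open>Naturality at lu I and f(I \<otimes> I) = f I \<otimes> f I make f I idempotent, hence trivial.\<close>
  have fE: "f \<in> carrier E11" using Z11D(1)[OF f] .
  note fd = E11D[OF fE]
  note facts = x I I_def[symmetric]
  have u: "iso2 (f I)" "f I \<in> Cel" "dm (f I) = I" "cd (f I) = I" using fd I by auto
  have mult: "f (hm I I) = hc (f I) (f I)" using Z11D(2)[OF f I(1) I(1)] I by simp
  have "vc (f (cd (lu I))) (lu I) = vc (lu I) (f (dm (lu I)))" using fd(6)[of "lu I"] I by simp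
  then have n1: "vc (f I) (lu I) = vc (lu I) (hc (f I) (f I))" using mult by (simp add: facts)
  have n2: "vc (f I) (lu I) = vc (lu I) (hc (ic I) (f I))" using lu_nat[of "f I"] u by (simp add: facts)
  have "vc (lu I) (hc (f I) (f I)) = vc (lu I) (hc (ic I) (f I))" using n1 n2 by simp
  then have e1: "hc (f I) (f I) = hc (ic I) (f I)"
    by (rule iso2_cancel_left[rotated 5]) (simp_all add: facts u)
  have "vc (hc (f I) (ic I)) (hc (ic I) (f I)) = vc (ic (hm I I)) (hc (ic I) (f I))"
    using hc_whiskers_right_after_left[of "f I" "f I"] e1 u by (simp add: facts)
  then have e2: "hc (f I) (ic I) = ic (hm I I)"
    by (rule iso2_cancel_right[rotated 5]) (simp_all add: facts u)
  have "vc (f I) (ru I) = vc (ic I) (ru I)" using ru_nat[of "f I"] u e2 by (simp add: facts)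
  then have "f I = ic I" by (rule iso2_cancel_right[rotated 5]) (simp_all add: facts u)
  then show ?thesis by (simp add: I_def)
qed

lemma zobj_unit_braiding:
  assumes f: "f \<in> Z11"
  shows "zobj (un, unit_braiding f)"
proof -
  have fE: "f \<in> carrier E11" using Z11D(1)[OF f] .
  note fd = E11D[OF fE]
  have nat: "vc (unit_braiding f (cd a)) (hc (ic (un (tg (dm a)))) a) = vc (hc a (ic (un (sr (dm a))))) (unit_braiding f (dm a))"
    if a: "a \<in> Cel" for a
  proof -
    have "vc (unit_braiding f (cd a)) (hc (ic (un (tg (dm a)))) a) = vc (inv2 (ru (cd a))) (vc (f (cd a)) (vc (lu (cd a)) (hc (ic (un (tg (dm a)))) a)))"
      using a fd by (simp add: unit_braiding_def)
    also have "\<dots> = vc (inv2 (ru (cd a))) (vc (f (cd a)) (vc a (lu (dm a))))"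
      using lu_nat[OF a] by simp
    also have "\<dots> = vc (inv2 (ru (cd a))) (vc a (vc (f (dm a)) (lu (dm a))))"
      using vc_subst_prefix[OF fd(6)[OF a]] a fd by simp
    also have "\<dots> = vc (hc a (ic (un (sr (dm a))))) (vc (inv2 (ru (dm a))) (vc (f (dm a)) (lu (dm a))))"
      using vc_subst_prefix[OF ru_nat_inv[OF a]] a fd by simp
    also have "\<dots> = vc (hc a (ic (un (sr (dm a))))) (unit_braiding f (dm a))"
      using a fd by (simp add: unit_braiding_def)
    finally show ?thesis .
  qed
  have unit: "unit_braiding f (un x) = vc (inv2 (lu (un x))) (ru (un x))" if x: "x \<in> Ob" for x
    using Z11_unit[OF f x] lu_un_eq_ru_un[OF x] x by (simp add: unit_braiding_def)
  have hex: "unit_braiding f (hm M N) = vc (inv2 (asc M N (un (sr N))))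
                     (vc (hc (ic M) (unit_braiding f N))
                      (vc (asc M (un (sr M)) N)
                       (vc (hc (unit_braiding f M) (ic N))
                        (inv2 (asc (un (tg M)) M N)))))"
    if M: "M \<in> Mor" and N: "N \<in> Mor" and MN: "sr M = tg N" for M N
    using unit_braiding_hexagon[OF M N MN] Z11D(2)[OF f M N MN] fd M N MN by (simp add: unit_braiding_def)
  show ?thesis unfolding zobj_def using nat unit hex fd by (auto simp: iso2_cel)
qed

definition unit_unbraiding :: "('m \<Rightarrow> 'c) \<Rightarrow> 'm \<Rightarrow> 'c" where
  "unit_unbraiding q = (\<lambda>M\<in>Mor. vc (ru M) (vc (q M) (inv2 (lu M))))"

lemma unit_unbraiding_simps:
  assumes Z: "zobj (un, q)" and M: "M \<in> Mor"
  shows "unit_unbraiding q M \<in> Cel" "dm (unit_unbraiding q M) = M" "cd (unit_unbraiding q M) = M"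
    "iso2 (unit_unbraiding q M)"
  using M ztypedD[OF zobj_typed[OF Z]] zobjD(1)[OF Z] by (simp_all add: unit_unbraiding_def)

lemma unit_braiding_unbraiding:
  assumes Z: "zobj (un, q)" and M: "M \<in> Mor"
  shows "unit_braiding (unit_unbraiding q) M = q M"
  using M ztypedD[OF zobj_typed[OF Z]] zobjD(1)[OF Z] by (simp add: unit_braiding_def unit_unbraiding_def)

lemma unit_unbraiding_nat:
  assumes Z: "zobj (un, q)" and a: "a \<in> Cel"
  shows "vc (unit_unbraiding q (cd a)) a = vc a (unit_unbraiding q (dm a))"
proof -
  note [simp] = ztypedD[OF zobj_typed[OF Z]] zobjD(1)[OF Z] unit_unbraiding_def
  have "vc (unit_unbraiding q (cd a)) a = vc (ru (cd a)) (vc (q (cd a)) (vc (inv2 (lu (cd a))) a))"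
    using a by simp
  also have "\<dots> = vc (ru (cd a)) (vc (q (cd a)) (vc (hc (ic (un (tg (dm a)))) a) (inv2 (lu (dm a)))))"
    using lu_nat_inv[OF a] by simp
  also have "\<dots> = vc (ru (cd a)) (vc (hc a (ic (un (sr (dm a))))) (vc (q (dm a)) (inv2 (lu (dm a)))))"
    using vc_subst_prefix[OF zobjD(2)[OF Z a]] a by simp
  also have "\<dots> = vc a (vc (ru (dm a)) (vc (q (dm a)) (inv2 (lu (dm a)))))"
    using vc_subst_prefix[OF ru_nat[OF a, symmetric]] a by simp
  also have "\<dots> = vc a (unit_unbraiding q (dm a))" using a by simp
  finally show ?thesis .
qed

lemma unit_unbraiding_hm:
  assumes Z: "zobj (un, q)" and M: "M \<in> Mor" and N: "N \<in> Mor" and MN: "sr M = tg N"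
  shows "unit_unbraiding q (hm M N) = hc (unit_unbraiding q M) (unit_unbraiding q N)"
proof (rule unit_braiding_cancel)
  let ?f = "unit_unbraiding q"
  note [simp] = unit_unbraiding_simps[OF Z] unit_braiding_unbraiding[OF Z]
  have "vc (inv2 (ru (hm M N))) (vc (?f (hm M N)) (lu (hm M N))) = q (hm M N)"
    using unit_braiding_unbraiding[OF Z, of "hm M N"] M N MN by (simp add: unit_braiding_def)
  also have "\<dots> = vc (inv2 (asc M N (un (sr N)))) (vc (hc (ic M) (unit_braiding ?f N)) (vc (asc M (un (sr M)) N)
        (vc (hc (unit_braiding ?f M) (ic N)) (inv2 (asc (un (tg M)) M N)))))"
    using zobjD(4)[OF Z M N MN] M N by simp
  also have "\<dots> = vc (inv2 (ru (hm M N))) (vc (hc (?f M) (?f N)) (lu (hm M N)))"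
    by (rule unit_braiding_hexagon) (use M N MN in simp_all)
  finally show "vc (inv2 (ru (hm M N))) (vc (?f (hm M N)) (lu (hm M N)))
      = vc (inv2 (ru (hm M N))) (vc (hc (?f M) (?f N)) (lu (hm M N)))" .
qed (use M N MN unit_unbraiding_simps[OF Z] in simp_all)

lemma Z11_unit_unbraiding: "zobj (un, q) \<Longrightarrow> unit_unbraiding q \<in> Z11"
  using unit_unbraiding_simps unit_unbraiding_nat unit_unbraiding_hm
  by (auto simp: Z11_iff E11_carrier) (simp add: unit_unbraiding_def)

lemma ztyped_unit_braiding: "f \<in> carrier E11 \<Longrightarrow> ztyped (un, unit_braiding f)"
  using E11D[of f] unfolding ztyped_def by simp

lemma zisom_unit_cong:
  assumes Z: "zobj (un, q)" and e: "\<And>M. M \<in> Mor \<Longrightarrow> p M = q M" and T: "ztyped (un, p)"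
  shows "zisom (un, p) (un, q)"
proof -
  have h: "zhom (un, p) (un, q) (\<lambda>x. ic (un x))"
    using e ztypedD[OF T] by (simp add: zhom_iff)
  have Zp: "zobj (un, p)"
    by (rule zobj_transport[OF Z T _ _ _ zhomD(4)[OF h]]) simp_all
  show ?thesis by (rule zisomI[OF Zp Z h]) simp
qed

lemma ztensor_unit_braiding_zhom:
  assumes f: "f \<in> carrier E11" and g: "g \<in> carrier E11"
  shows "zhom (ztensor (un, unit_braiding f) (un, unit_braiding g)) (un, unit_braiding (\<lambda>M\<in>Mor. vc (f M) (g M))) (\<lambda>x. lu (un x))"
proof -
  note [simp] = E11D(2-5)[OF f] E11D(2-5)[OF g]
  have main: "vc (hc (ic M) (lu (un (sr M)))) (vc (asc M (un (sr M)) (un (sr M))) (vc (hc (unit_braiding f M) (ic (un (sr M))))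
          (vc (inv2 (asc (un (tg M)) M (un (sr M)))) (vc (hc (ic (un (tg M))) (unit_braiding g M)) (asc (un (tg M)) (un (tg M)) M)))))
       = vc (unit_braiding (\<lambda>M\<in>Mor. vc (f M) (g M)) M) (hc (lu (un (tg M))) (ic M))"
    if M: "M \<in> Mor" for M
  proof -
    let ?s = "sr M" and ?t = "tg M"
    have s: "?s \<in> Ob" "?t \<in> Ob" using M by auto
    have "vc (hc (ic M) (lu (un ?s))) (vc (asc M (un ?s) (un ?s)) (vc (hc (unit_braiding f M) (ic (un ?s)))
          (vc (inv2 (asc (un ?t) M (un ?s))) (vc (hc (ic (un ?t)) (unit_braiding g M)) (asc (un ?t) (un ?t) M)))))
       = vc (ru (hm M (un ?s))) (vc (hc (unit_braiding f M) (ic (un ?s)))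
          (vc (inv2 (asc (un ?t) M (un ?s))) (vc (hc (ic (un ?t)) (unit_braiding g M)) (asc (un ?t) (un ?t) M))))"
      using lu_un_eq_ru_un[OF s(1)] vc_subst_prefix[OF ru_hm_asc[of M "un ?s"]] M by simp
    also have "\<dots> = vc (unit_braiding f M) (vc (ru (hm (un ?t) M))
          (vc (inv2 (asc (un ?t) M (un ?s))) (vc (hc (ic (un ?t)) (unit_braiding g M)) (asc (un ?t) (un ?t) M))))"
      using vc_subst_prefix[OF ru_nat[of "unit_braiding f M", symmetric]] M by simp
    also have "\<dots> = vc (unit_braiding f M) (vc (hc (ic (un ?t)) (ru M)) (vc (hc (ic (un ?t)) (unit_braiding g M)) (asc (un ?t) (un ?t) M)))"
      using vc_subst_prefix[OF ru_hm_inv_asc[of "un ?t" M]] M by simp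
    also have "\<dots> = vc (unit_braiding f M) (vc (hc (ic (un ?t)) (g M)) (vc (hc (ic (un ?t)) (lu M)) (asc (un ?t) (un ?t) M)))"
      using M by (simp add: unit_braiding_def whisker_left_vc)
    also have "\<dots> = vc (unit_braiding f M) (vc (hc (ic (un ?t)) (g M)) (hc (ru (un ?t)) (ic M)))"
      using triangle[of "un ?t" M] M by simp
    also have "\<dots> = vc (inv2 (ru M)) (vc (f M) (vc (g M) (vc (lu M) (hc (ru (un ?t)) (ic M)))))"
      using vc_subst_prefix[OF lu_nat[of "g M", symmetric]] M by (simp add: unit_braiding_def)
    also have "\<dots> = vc (unit_braiding (\<lambda>M\<in>Mor. vc (f M) (g M)) M) (hc (lu (un ?t)) (ic M))"
      using lu_un_eq_ru_un[OF s(2)] M by (simp add: unit_braiding_def)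
    finally show ?thesis .
  qed
  show ?thesis unfolding ztensor_def using main by (simp add: zhom_iff)
qed

abbreviation "Z11_group \<equiv> E11\<lparr>carrier := Z11\<rparr>"

lemma Z11_group_simps[simp]: "carrier Z11_group = Z11" "mult Z11_group = (\<lambda>f g. \<lambda>M\<in>Mor. vc (f M) (g M))" "one Z11_group = (\<lambda>M\<in>Mor. ic M)"
  by (simp_all add: E11_def)

lemma Z11_one: "(\<lambda>M\<in>Mor. ic M) \<in> Z11"
  unfolding Z11_iff E11_carrier by simp

lemma E11_one: "(\<lambda>M\<in>Mor. ic M) \<in> carrier E11"
  using Z11_one Z11D(1) by blast

lemma Z11_mult: assumes f: "f \<in> Z11" and g: "g \<in> Z11" shows "(\<lambda>M\<in>Mor. vc (f M) (g M)) \<in> Z11"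
proof -
  have fE: "f \<in> carrier E11" and gE: "g \<in> carrier E11" using Z11D(1) f g by auto
  note [simp] = E11D(2-5)[OF fE] E11D(2-5)[OF gE]
  have nat: "vc (vc (f (cd a)) (g (cd a))) a = vc a (vc (f (dm a)) (g (dm a)))" if a: "a \<in> Cel" for a
    using a E11D(6)[OF gE a] vc_subst_prefix[OF E11D(6)[OF fE a]] by simp
  have mult: "vc (f (hm M N)) (g (hm M N)) = hc (vc (f M) (g M)) (vc (f N) (g N))"
    if "M \<in> Mor" "N \<in> Mor" "sr M = tg N" for M N
    using that Z11D(2)[OF f] Z11D(2)[OF g] by (simp add: vc_hc_interchange)
  show ?thesis unfolding Z11_iff E11_carrier using nat mult by simp
qed

lemma Z11_inv: assumes f: "f \<in> Z11" shows "(\<lambda>M\<in>Mor. inv2 (f M)) \<in> Z11"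
proof -
  have fE: "f \<in> carrier E11" using Z11D(1) f by auto
  note [simp] = E11D(2-5)[OF fE]
  have nat: "vc (inv2 (f (cd a))) a = vc a (inv2 (f (dm a)))" if a: "a \<in> Cel" for a
    by (rule vc_inv2_swap[OF E11D(6)[OF fE a, symmetric]]) (use a in simp_all)
  have mult: "inv2 (f (hm M N)) = hc (inv2 (f M)) (inv2 (f N))"
    if "M \<in> Mor" "N \<in> Mor" "sr M = tg N" for M N
    using that Z11D(2)[OF f] by (simp add: inv2_hc)
  show ?thesis unfolding Z11_iff E11_carrier using nat mult by simp
qed

lemma Z11_comm: assumes f: "f \<in> Z11" and g: "g \<in> Z11" and M: "M \<in> Mor"
  shows "vc (f M) (g M) = vc (g M) (f M)"
proof -
  have fE: "f \<in> carrier E11" and gE: "g \<in> carrier E11" using Z11D(1) f g by auto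
  show ?thesis using E11D(6)[OF gE, of "f M"] E11D(2-5)[OF fE M] E11D(2-5)[OF gE M] iso2_cel by simp
qed

lemma Z11_comm_group: "comm_group Z11_group"
proof (rule comm_groupI)
  fix x y assume x: "x \<in> carrier Z11_group" and y: "y \<in> carrier Z11_group"
  then show "x \<otimes>\<^bsub>Z11_group\<^esub> y \<in> carrier Z11_group" using Z11_mult by simp
  show "x \<otimes>\<^bsub>Z11_group\<^esub> y = y \<otimes>\<^bsub>Z11_group\<^esub> x" using x y Z11_comm by (auto intro!: restrict_ext)
  fix z assume z: "z \<in> carrier Z11_group"
  show "x \<otimes>\<^bsub>Z11_group\<^esub> y \<otimes>\<^bsub>Z11_group\<^esub> z = x \<otimes>\<^bsub>Z11_group\<^esub> (y \<otimes>\<^bsub>Z11_group\<^esub> z)"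
    using x y z E11D(2-5)[OF Z11D(1)] by (auto intro!: restrict_ext simp: iso2_cel)
next
  show "\<one>\<^bsub>Z11_group\<^esub> \<in> carrier Z11_group" using Z11_one by simp
next
  fix x assume x: "x \<in> carrier Z11_group"
  then have xE: "x \<in> carrier E11" using Z11D(1) by simp
  show "\<one>\<^bsub>Z11_group\<^esub> \<otimes>\<^bsub>Z11_group\<^esub> x = x"
    using E11D[OF xE] by (auto intro!: extensionalityI[OF _ E11D(1)[OF xE]] simp: iso2_cel)
  show "\<exists>y\<in>carrier Z11_group. y \<otimes>\<^bsub>Z11_group\<^esub> x = \<one>\<^bsub>Z11_group\<^esub>"
    using x Z11_inv E11D(2-5)[OF xE] by (auto intro!: bexI[of _ "\<lambda>M\<in>Mor. inv2 (x M)"] restrict_ext)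
qed

section \<open>Coboundaries\<close>

definition lu_conj :: "('o \<Rightarrow> 'c) \<Rightarrow> 'm \<Rightarrow> 'c" where
  "lu_conj u M = vc (lu M) (vc (hc (u (tg M)) (ic M)) (inv2 (lu M)))"

definition ru_conj :: "('o \<Rightarrow> 'c) \<Rightarrow> 'm \<Rightarrow> 'c" where
  "ru_conj u M = vc (ru M) (vc (hc (ic M) (u (sr M))) (inv2 (ru M)))"

definition coboundary :: "('o \<Rightarrow> 'c) \<Rightarrow> 'm \<Rightarrow> 'c" where
  "coboundary u M = vc (lu M) (vc (hc (u (tg M)) (ic M)) (vc (inv2 (lu M))
            (vc (ru M) (vc (hc (ic M) (inv2 (u (sr M)))) (inv2 (ru M))))))"

definition unit_auts :: "('o \<Rightarrow> 'c) \<Rightarrow> bool" where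
  "unit_auts u \<longleftrightarrow> (\<forall>x\<in>Ob. iso2 (u x) \<and> dm (u x) = un x \<and> cd (u x) = un x)"

lemma unit_autsD: "unit_auts u \<Longrightarrow> x \<in> Ob \<Longrightarrow> iso2 (u x)" "unit_auts u \<Longrightarrow> x \<in> Ob \<Longrightarrow> u x \<in> Cel"
  "unit_auts u \<Longrightarrow> x \<in> Ob \<Longrightarrow> dm (u x) = un x" "unit_auts u \<Longrightarrow> x \<in> Ob \<Longrightarrow> cd (u x) = un x"
  unfolding unit_auts_def by (auto simp: iso2_cel)

lemma unit_auts_inv: "unit_auts u \<Longrightarrow> unit_auts (\<lambda>x. inv2 (u x))"
  unfolding unit_auts_def by auto

lemma unit_conj_simps[simp]:
  assumes "unit_auts u" "M \<in> Mor"
  shows "lu_conj u M \<in> Cel" "dm (lu_conj u M) = M" "cd (lu_conj u M) = M" "iso2 (lu_conj u M)"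
    "ru_conj u M \<in> Cel" "dm (ru_conj u M) = M" "cd (ru_conj u M) = M" "iso2 (ru_conj u M)"
    "coboundary u M \<in> Cel" "dm (coboundary u M) = M" "cd (coboundary u M) = M" "iso2 (coboundary u M)"
  using assms unit_autsD[OF assms(1)] by (simp_all add: lu_conj_def ru_conj_def coboundary_def)

lemma lu_conj_nat:
  assumes u: "unit_auts u" and a: "a \<in> Cel"
  shows "vc (lu_conj u (cd a)) a = vc a (lu_conj u (dm a))"
proof -
  note [simp] = unit_autsD[OF u]
  have sl: "vc (hc (u (tg (dm a))) (ic (cd a))) (hc (ic (un (tg (dm a)))) a) = vc (hc (ic (un (tg (dm a)))) a) (hc (u (tg (dm a))) (ic (dm a)))"
    using hc_slide[of "u (tg (dm a))" a] a by simp
  have "vc (lu_conj u (cd a)) a = vc (lu (cd a)) (vc (hc (u (tg (dm a))) (ic (cd a))) (vc (inv2 (lu (cd a))) a))"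
    using a by (simp add: lu_conj_def)
  also have "\<dots> = vc (lu (cd a)) (vc (hc (u (tg (dm a))) (ic (cd a))) (vc (hc (ic (un (tg (dm a)))) a) (inv2 (lu (dm a)))))"
    using lu_nat_inv[OF a] by simp
  also have "\<dots> = vc (lu (cd a)) (vc (hc (ic (un (tg (dm a)))) a) (vc (hc (u (tg (dm a))) (ic (dm a))) (inv2 (lu (dm a)))))"
    using vc_subst_prefix[OF sl] a by simp
  also have "\<dots> = vc a (vc (lu (dm a)) (vc (hc (u (tg (dm a))) (ic (dm a))) (inv2 (lu (dm a)))))"
    using vc_subst_prefix[OF lu_nat[OF a, symmetric]] a by simp
  also have "\<dots> = vc a (lu_conj u (dm a))" using a by (simp add: lu_conj_def)
  finally show ?thesis .
qed

lemma coboundary_zhom: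
  assumes f: "f \<in> carrier E11" and u: "unit_auts u"
  shows "zhom (un, unit_braiding (\<lambda>M\<in>Mor. vc (coboundary u M) (f M))) (un, unit_braiding f) u"
proof -
  note [simp] = unit_autsD[OF u] E11D(2-5)[OF f]
  have main: "vc (unit_braiding f M) (hc (u (tg M)) (ic M)) = vc (hc (ic M) (u (sr M))) (unit_braiding (\<lambda>M\<in>Mor. vc (coboundary u M) (f M)) M)"
    if M: "M \<in> Mor" for M
  proof -
    have ui: "unit_auts (\<lambda>x. inv2 (u x))" by (rule unit_auts_inv[OF u])
    have "vc (hc (ic M) (u (sr M))) (unit_braiding (\<lambda>M\<in>Mor. vc (coboundary u M) (f M)) M)
       = vc (inv2 (ru M)) (vc (ru_conj u M) (vc (lu_conj u M) (vc (ru_conj (\<lambda>x. inv2 (u x)) M) (vc (f M) (lu M)))))"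
      using M by (simp add: unit_braiding_def coboundary_def lu_conj_def ru_conj_def)
    also have "\<dots> = vc (inv2 (ru M)) (vc (lu_conj u M) (vc (ru_conj u M) (vc (ru_conj (\<lambda>x. inv2 (u x)) M) (vc (f M) (lu M)))))"
      using vc_subst_prefix[OF lu_conj_nat[OF u, of "ru_conj u M", symmetric]] M u ui by simp
    also have "\<dots> = vc (inv2 (ru M)) (vc (lu_conj u M) (vc (f M) (lu M)))"
      using M by (simp add: ru_conj_def)
    also have "\<dots> = vc (inv2 (ru M)) (vc (f M) (vc (lu_conj u M) (lu M)))"
      using vc_subst_prefix[OF E11D(6)[OF f, of "lu_conj u M"]] M u by simp
    also have "\<dots> = vc (unit_braiding f M) (hc (u (tg M)) (ic M))"
      using M by (simp add: unit_braiding_def lu_conj_def)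
    finally show ?thesis by simp
  qed
  show ?thesis using main by (simp add: zhom_iff)
qed

section \<open>The comparison map\<close>

lemma isoclass1_eq:
  assumes a: "iso2 a" "dm a = M" "cd a = N"
  shows "isoclass1 M = isoclass1 N"
proof -
  have Mm: "M \<in> Mor" "N \<in> Mor" using a iso2_cel cel_simps by blast+
  show ?thesis
  proof (rule Set.set_eqI)
    fix K
    show "K \<in> isoclass1 M \<longleftrightarrow> K \<in> isoclass1 N"
    proof
      assume "K \<in> isoclass1 M"
      then obtain b where b: "K \<in> Mor" "iso2 b" "dm b = M" "cd b = K" unfolding isoclass1_def by blast
      have "iso2 (vc b (inv2 a)) \<and> dm (vc b (inv2 a)) = N \<and> cd (vc b (inv2 a)) = K"
        using a b by (simp add: iso2_cel)
      then show "K \<in> isoclass1 N" using b unfolding isoclass1_def by blast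
    next
      assume "K \<in> isoclass1 N"
      then obtain b where b: "K \<in> Mor" "iso2 b" "dm b = N" "cd b = K" unfolding isoclass1_def by blast
      have "iso2 (vc b a) \<and> dm (vc b a) = M \<and> cd (vc b a) = K"
        using a b by (simp add: iso2_cel)
      then show "K \<in> isoclass1 M" using b unfolding isoclass1_def by blast
    qed
  qed
qed

definition center_class :: "('m \<Rightarrow> 'c) \<Rightarrow> (('o \<Rightarrow> 'm) \<times> ('m \<Rightarrow> 'c)) set" where
  "center_class f = zclass (un, unit_braiding f)"

lemma KerZ_simps: "carrier KerZ = {A \<in> carrier IsoZ. char_map A = ZHo_one}"
  "mult KerZ = (\<lambda>A C. zclass (ztensor (SOME r. r \<in> A) (SOME r. r \<in> C)))"
  "one KerZ = zclass zunit"
  "carrier IsoZ = {zclass Pp | Pp. zobj Pp}"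
  by (simp_all add: KerZ_def IsoZ_def)

lemma some_zclass:
  assumes "zobj Pp"
  shows "(SOME r. r \<in> zclass Pp) \<in> zclass Pp" "zisom Pp (SOME r. r \<in> zclass Pp)"
proof -
  show 1: "(SOME r. r \<in> zclass Pp) \<in> zclass Pp" using zclass_mem[OF assms] by (rule someI)
  show "zisom Pp (SOME r. r \<in> zclass Pp)" using zclass_memD[OF 1] .
qed

lemma char_map_zclass:
  assumes Z: "zobj (P, p)"
  shows "char_map (zclass (P, p)) = (\<lambda>x\<in>Ob. isoclass1 (P x))"
proof -
  obtain R r where e: "(SOME r. r \<in> zclass (P, p)) = (R, r)" by (cases "SOME r. r \<in> zclass (P, p)")
  have "zisom (P, p) (R, r)" using some_zclass(2)[OF Z] e by simp
  then obtain h where h: "zhom (P, p) (R, r) h" "\<forall>x\<in>Ob. iso2 (h x)" using zisomD(3) by blast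
  have "isoclass1 (R x) = isoclass1 (P x)" if x: "x \<in> Ob" for x
    using isoclass1_eq[of "h x" "P x" "R x"] h zhomD(2,3)[OF h(1) x] x by simp
  then show ?thesis unfolding char_map_def e by (auto intro!: restrict_ext)
qed

lemma center_class_in_KerZ: assumes f: "f \<in> Z11" shows "center_class f \<in> carrier KerZ"
proof -
  have Z: "zobj (un, unit_braiding f)" using zobj_unit_braiding[OF f] .
  show ?thesis unfolding KerZ_simps center_class_def ZHo_one_def using Z char_map_zclass[OF Z] by auto
qed

lemma zisom_unbraiding:
  assumes Z: "zobj (un, q)"
  shows "zisom (un, unit_braiding (unit_unbraiding q)) (un, q)"
proof (rule zisom_unit_cong[OF Z])
  show "ztyped (un, unit_braiding (unit_unbraiding q))"
    by (rule ztyped_unit_braiding[OF Z11D(1)[OF Z11_unit_unbraiding[OF Z]]])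
qed (rule unit_braiding_unbraiding[OF Z])

lemma ex_zisom_over_units:
  assumes Z: "zobj (R, rr)" and iso: "\<And>x. x \<in> Ob \<Longrightarrow> isoclass1 (R x) = isoclass1 (un x)"
  shows "\<exists>q. zobj (un, q) \<and> zisom (un, q) (R, rr)"
proof -
  have ex: "\<exists>a. iso2 a \<and> dm a = R x \<and> cd a = un x" if x: "x \<in> Ob" for x
  proof -
    have "un x \<in> isoclass1 (un x)" unfolding isoclass1_def using x by (auto intro!: exI[of _ "ic (un x)"])
    then show ?thesis using iso[OF x] unfolding isoclass1_def by auto
  qed
  define h where "h x = (SOME a. iso2 a \<and> dm a = R x \<and> cd a = un x)" for x
  have h: "iso2 (h x)" "dm (h x) = R x" "cd (h x) = un x" "h x \<in> Cel" if "x \<in> Ob" for x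
    using someI_ex[OF ex[OF that]] iso2_cel unfolding h_def by auto
  define q where "q M = vc (hc (ic M) (h (sr M))) (vc (rr M) (inv2 (hc (h (tg M)) (ic M))))" for M
  note [simp] = h ztypedD[OF zobj_typed[OF Z]]
  have Tq: "ztyped (un, q)" unfolding ztyped_def q_def by simp
  have hom: "zhom (un, q) (R, rr) (\<lambda>x. inv2 (h x))"
    unfolding zhom_iff q_def by simp
  have Zq: "zobj (un, q)"
    by (rule zobj_transport[OF Z Tq _ _ _ zhomD(4)[OF hom]]) simp_all
  moreover have "zisom (un, q) (R, rr)"
    by (rule zisomI[OF Zq Z hom]) simp
  ultimately show ?thesis by blast
qed

lemma center_class_onto_KerZ:
  assumes A: "A \<in> carrier KerZ"
  shows "\<exists>f\<in>Z11. A = center_class f"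
proof -
  obtain R rr where Z: "zobj (R, rr)" and Ae: "A = zclass (R, rr)" and ch: "char_map A = ZHo_one"
    using A unfolding KerZ_simps by auto
  have "isoclass1 (R x) = isoclass1 (un x)" if x: "x \<in> Ob" for x
    using fun_cong[OF ch[unfolded Ae char_map_zclass[OF Z] ZHo_one_def], of x] x by simp
  then obtain q where Zq: "zobj (un, q)" and qR: "zisom (un, q) (R, rr)"
    using ex_zisom_over_units[OF Z] by blast
  have "zisom (un, unit_braiding (unit_unbraiding q)) (R, rr)"
    using zisom_trans[OF zisom_unbraiding[OF Zq] qR] .
  then have "center_class (unit_unbraiding q) = A" unfolding center_class_def Ae by (rule zclass_eq)
  then show ?thesis using Z11_unit_unbraiding[OF Zq] by blast
qed

lemma ztensor_zisom_unit_braiding: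
  assumes f: "f \<in> Z11" and g: "g \<in> Z11" and A: "zisom (un, unit_braiding f) A" and C: "zisom (un, unit_braiding g) C"
  shows "zisom (ztensor A C) (un, unit_braiding (\<lambda>M\<in>Mor. vc (f M) (g M)))"
proof -
  obtain P p where Ae: "A = (P, p)" by (cases A)
  obtain Q q where Ce: "C = (Q, q)" by (cases C)
  have fE: "f \<in> carrier E11" and gE: "g \<in> carrier E11" using f g Z11D(1) by auto
  have ZA: "zobj (P, p)" and ZC: "zobj (Q, q)" using zisomD(2) A C Ae Ce by auto
  obtain a where a: "zhom (un, unit_braiding f) (P, p) a" "\<forall>x\<in>Ob. iso2 (a x)" using zisomD(3) A Ae by blast
  obtain c where c: "zhom (un, unit_braiding g) (Q, q) c" "\<forall>x\<in>Ob. iso2 (c x)" using zisomD(3) C Ce by blast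
  have TA: "ztyped (P, p)" and TC: "ztyped (Q, q)" using zobj_typed ZA ZC by auto
  have Tf: "ztyped (un, unit_braiding f)" and Tg: "ztyped (un, unit_braiding g)" using ztyped_unit_braiding fE gE by auto
  have a': "zhom (P, p) (un, unit_braiding f) (\<lambda>x. inv2 (a x))" by (rule zhom_inv[OF a(1)]) (use a(2) Tf TA in auto)
  have c': "zhom (Q, q) (un, unit_braiding g) (\<lambda>x. inv2 (c x))" by (rule zhom_inv[OF c(1)]) (use c(2) Tg TC in auto)
  have h1: "zhom (ztensor (P, p) (Q, q)) (ztensor (un, unit_braiding f) (un, unit_braiding g)) (\<lambda>x. hc (inv2 (a x)) (inv2 (c x)))"
    by (rule ztensor_hom[OF a' c' TA Tf TC Tg])
  have h2: "zhom (ztensor (un, unit_braiding f) (un, unit_braiding g)) (un, unit_braiding (\<lambda>M\<in>Mor. vc (f M) (g M))) (\<lambda>x. lu (un x))"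
    by (rule ztensor_unit_braiding_zhom[OF fE gE])
  obtain T t where Te: "ztensor (P, p) (Q, q) = (T, t)" by (cases "ztensor (P, p) (Q, q)")
  obtain T' t' where Te': "ztensor (un, unit_braiding f) (un, unit_braiding g) = (T', t')" by (cases "ztensor (un, unit_braiding f) (un, unit_braiding g)")
  have fg: "(\<lambda>M\<in>Mor. vc (f M) (g M)) \<in> Z11" by (rule Z11_mult[OF f g])
  have Zfg: "zobj (un, unit_braiding (\<lambda>M\<in>Mor. vc (f M) (g M)))" by (rule zobj_unit_braiding[OF fg])
  have TT: "ztyped (T, t)" using ztensor_typed[OF TA TC] Te by simp
  have TT': "ztyped (T', t')" using ztensor_typed[OF Tf Tg] Te' by simp
  have h3: "zhom (T, t) (un, unit_braiding (\<lambda>M\<in>Mor. vc (f M) (g M))) (\<lambda>x. vc (lu (un x)) (hc (inv2 (a x)) (inv2 (c x))))"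
    by (rule zhom_comp[OF h1[unfolded Te Te'] h2[unfolded Te'] TT TT' zobj_typed[OF Zfg]])
  have isoh: "iso2 (vc (lu (un x)) (hc (inv2 (a x)) (inv2 (c x))))" if x: "x \<in> Ob" for x
  proof -
    have "dm (a x) = un x" "cd (a x) = P x" "dm (c x) = un x" "cd (c x) = Q x"
      using zhomD(2,3)[OF a(1) x] zhomD(2,3)[OF c(1) x] by auto
    then show ?thesis using a(2) c(2) x ztypedD[OF TA] ztypedD[OF TC] by simp
  qed
  have dmh: "dm (vc (lu (un x)) (hc (inv2 (a x)) (inv2 (c x)))) = T x" "cd (vc (lu (un x)) (hc (inv2 (a x)) (inv2 (c x)))) = un x"
    if x: "x \<in> Ob" for x
    using zhomD(2,3)[OF h3 x] by auto
  have ZT: "zobj (T, t)"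
    by (rule zobj_transport[OF Zfg TT isoh dmh zhomD(4)[OF h3]])
  show ?thesis using zisomI[OF ZT Zfg h3 isoh] Ae Ce Te by simp
qed

lemma center_class_mult:
  assumes f: "f \<in> Z11" and g: "g \<in> Z11"
  shows "center_class (\<lambda>M\<in>Mor. vc (f M) (g M)) = mult KerZ (center_class f) (center_class g)"
proof -
  have Zf: "zobj (un, unit_braiding f)" and Zg: "zobj (un, unit_braiding g)" using zobj_unit_braiding f g by auto
  have "zisom (ztensor (SOME r. r \<in> center_class f) (SOME r. r \<in> center_class g)) (un, unit_braiding (\<lambda>M\<in>Mor. vc (f M) (g M)))"
    by (rule ztensor_zisom_unit_braiding[OF f g]) (use some_zclass(2)[OF Zf] some_zclass(2)[OF Zg] in \<open>simp_all add: center_class_def\<close>)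
  then show ?thesis unfolding KerZ_simps center_class_def by (simp add: zclass_eq)
qed

lemma center_class_one: "one KerZ = center_class (\<lambda>M\<in>Mor. ic M)"
proof -
  have o: "(\<lambda>M\<in>Mor. ic M) \<in> Z11" by (rule Z11_one)
  have Z1: "zobj (un, unit_braiding (\<lambda>M\<in>Mor. ic M))" by (rule zobj_unit_braiding[OF o])
  obtain U u where ze: "zunit = (U, u)" by (cases zunit)
  have Ue: "U = un" "\<And>M. u M = vc (inv2 (ru M)) (lu M)" using ze unfolding zunit_def by auto
  have e: "u M = unit_braiding (\<lambda>M\<in>Mor. ic M) M" if "M \<in> Mor" for M
    using that Ue by (simp add: unit_braiding_def)
  have Tu: "ztyped (un, u)" unfolding ztyped_def using Ue by simp
  have "zisom (un, u) (un, unit_braiding (\<lambda>M\<in>Mor. ic M))" by (rule zisom_unit_cong[OF Z1 e Tu])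
  then show ?thesis unfolding KerZ_simps center_class_def ze Ue(1) by (rule zclass_eq)
qed

lemma B11_sub_center_class_kernel:
  assumes fB: "f \<in> B11"
  shows "f \<in> Z11" "center_class f = center_class (\<lambda>M\<in>Mor. ic M)"
proof -
  let ?one = "\<lambda>M\<in>Mor. ic M"
  have Z1: "zobj (un, unit_braiding ?one)" by (rule zobj_unit_braiding[OF Z11_one])
  obtain u where fe: "f \<in> extensional Mor" and u: "u \<in> E01" and fM: "\<And>M. M \<in> Mor \<Longrightarrow> f M = coboundary u M"
    using fB unfolding B11_def coboundary_def by auto
  have uu: "unit_auts u" using u unfolding E01_def unit_auts_def by auto
  have "(\<lambda>M\<in>Mor. vc (coboundary u M) (?one M)) = f"
    by (rule extensionalityI[OF _ fe]) (auto simp: fM uu)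
  with coboundary_zhom[OF E11_one uu] have h: "zhom (un, unit_braiding f) (un, unit_braiding ?one) u" by simp
  have fty[simp]: "f M \<in> Cel" "dm (f M) = M" "cd (f M) = M" "iso2 (f M)" if "M \<in> Mor" for M
    using that fM uu by auto
  have T: "ztyped (un, unit_braiding f)" unfolding ztyped_def by simp
  have Zf: "zobj (un, unit_braiding f)"
    by (rule zobj_transport[OF Z1 T _ _ _ zhomD(4)[OF h]]) (use unit_autsD[OF uu] in auto)
  have "unit_unbraiding (unit_braiding f) = f"
    by (rule extensionalityI[OF _ fe]) (auto simp: unit_braiding_def unit_unbraiding_def)
  then show "f \<in> Z11" using Z11_unit_unbraiding[OF Zf] by simp
  have "zisom (un, unit_braiding f) (un, unit_braiding ?one)"
    by (rule zisomI[OF Zf Z1 h]) (use unit_autsD[OF uu] in auto)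
  then show "center_class f = center_class ?one" unfolding center_class_def by (rule zclass_eq)
qed

lemma center_class_kernel_sub_B11:
  assumes fZ: "f \<in> Z11" and ps: "center_class f = center_class (\<lambda>M\<in>Mor. ic M)"
  shows "f \<in> B11"
proof -
  let ?one = "\<lambda>M\<in>Mor. ic M"
  have Z1: "zobj (un, unit_braiding ?one)" by (rule zobj_unit_braiding[OF Z11_one])
  have fE: "f \<in> carrier E11" using Z11D(1)[OF fZ] .
  have "(un, unit_braiding ?one) \<in> center_class f" using zclass_mem[OF Z1] ps unfolding center_class_def by simp
  then have "zisom (un, unit_braiding f) (un, unit_braiding ?one)" unfolding center_class_def by (rule zclass_memD)
  then obtain h where h: "zhom (un, unit_braiding f) (un, unit_braiding ?one) h" "\<forall>x\<in>Ob. iso2 (h x)"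
    using zisomD(3) by blast
  have hu: "unit_auts h" unfolding unit_auts_def using h(2) zhomD(2,3)[OF h(1)] by simp
  have h2: "zhom (un, unit_braiding (\<lambda>M\<in>Mor. vc (coboundary h M) (?one M))) (un, unit_braiding ?one) h"
    by (rule coboundary_zhom[OF E11_one hu])
  note [simp] = unit_autsD[OF hu] E11D(2-5)[OF fE]
  have fb: "f M = coboundary h M" if M: "M \<in> Mor" for M
  proof (rule unit_braiding_cancel[OF M])
    have "vc (hc (ic M) (h (sr M))) (unit_braiding f M)
        = vc (hc (ic M) (h (sr M))) (unit_braiding (\<lambda>M\<in>Mor. vc (coboundary h M) (?one M)) M)"
      using zhomD(4)[OF h(1) M] zhomD(4)[OF h2 M] by simp
    then have "unit_braiding f M = unit_braiding (\<lambda>M\<in>Mor. vc (coboundary h M) (?one M)) M"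
      by (rule iso2_cancel_left[rotated 5]) (use M hu in simp_all)
    then show "vc (inv2 (ru M)) (vc (f M) (lu M)) = vc (inv2 (ru M)) (vc (coboundary h M) (lu M))"
      using M hu by (simp add: unit_braiding_def)
  qed (use M hu in simp_all)
  have u: "restrict h Ob \<in> E01" unfolding E01_def using unit_autsD[OF hu] by auto
  have "coboundary (restrict h Ob) M = coboundary h M" if "M \<in> Mor" for M
    using that by (simp add: coboundary_def)
  then show "f \<in> B11" unfolding B11_def
    using E11D(1)[OF fE] fb u unfolding coboundary_def by (auto intro!: bexI[of _ "restrict h Ob"])
qed

lemma B11_eq_center_class_kernel: "B11 = {f \<in> Z11. center_class f = center_class (\<lambda>M\<in>Mor. ic M)}"
  using B11_sub_center_class_kernel center_class_kernel_sub_B11 by blast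

end

theorem proposition3p3:
  fixes B :: "('o,'m,'c) bicat"
  assumes "bicategory B"
  shows "comm_group (bicat_ops.E2 B) \<and> comm_group (bicat_ops.KerZ B) \<and>
         bicat_ops.E2 B \<cong> bicat_ops.KerZ B"
proof -
  interpret bicategory B by (rule assms)
  have E2e: "E2 = Z11_group Mod B11" by (simp add: E2_def)
  show ?thesis unfolding E2e
  proof (rule FactGroup_iso_onto[where \<psi> = center_class])
    show "comm_group Z11_group" by (rule Z11_comm_group)
    show "B11 = {x \<in> carrier Z11_group. center_class x = center_class \<one>\<^bsub>Z11_group\<^esub>}" using B11_eq_center_class_kernel by simp
    show "center_class ` carrier Z11_group = carrier KerZ"
      using center_class_in_KerZ center_class_onto_KerZ by auto
    show "\<And>x y. x \<in> carrier Z11_group \<Longrightarrow> y \<in> carrier Z11_group \<Longrightarrow> center_class (x \<otimes>\<^bsub>Z11_group\<^esub> y) = center_class x \<otimes>\<^bsub>KerZ\<^esub> center_class y"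
      using center_class_mult by simp
    show "\<one>\<^bsub>KerZ\<^esub> = center_class \<one>\<^bsub>Z11_group\<^esub>" using center_class_one by simp
  qed
qed

end
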